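(* Let $H\ge1$, $d_0=d_x$, $d_{H+1}=d_y$, and widths $d_1,\dots,d_H$ with $d_j\ge\min\{d_x,d_y\}$ for all $j$. For $W_j\in\mathbb{R}^{d_j\times d_{j-1}}$, $j\in[H+1]$, write $W_{i:j}=W_iW_{i-1}\cdots W_j$ for $i\ge j$ and $W_{j-1:j}=I$. Let $\ell_0:\mathbb{R}^{d_y\times d_x}\to\mathbb{R}$ be differentiable and define $\ell((W_j)_{j=1}^{H+1})=\ell_0(W_{H+1:1})$. Let $(\hat W_j)_{j=1}^{H+1}$ be any critical point of $\ell$. Then: 1. If $\nabla\ell_0(\hat W_{H+1:1})\ne0$, then $(\hat W_j)_{j=1}^{H+1}$ is a saddle point of $\ell$. 2. If $\nabla\ell_0(\hat W_{H+1:1})=0$, then (a) $(\hat W_j)_{j=1}^{H+1}$ is a local minimum (resp. maximum) of $\ell$ if $\hat W_{H+1:1}$ is a local minimum (resp. maximum) of $\ell_0$; and (b) $(\hat W_j)_{j=1}^{H+1}$ is a global minimum (resp. maximum) of $\ell$ if and only if $\hat W_{H+1:1}$ is a global minimum (resp. maximum) of $\ell_0$. 3. If there exists $j^*\in[H+1]$ such that $\hat W_{H+1:j^*+1}$ has full row rank and $\hat W_{j^*-1:1}$ has full column rank, then $\nabla\ell_0(\hat W_{H+1:1})=0$ (so 2(a) and 2(b) hold), and moreover (a) $\hat W_{H+1:1}$ is a local minimum (resp. maximum) of $\ell_0$ if $(\hat W_j)_{j=1}^{H+1}$ is a local minimum (resp. maximum) of $\ell$.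
   Context: $[a]=\{1,\dots,a\}$. A critical point of $\ell$ is a point where all partial derivatives $\partial\ell/\partial W_j$ vanish. A saddle point is a critical point that is neither a local minimum nor a local maximum. *)

theory Defs
  imports Complex_Main
begin

text \<open>Real matrices with explicit dimensions: an m x n matrix is a function
  nat => nat => real that vanishes outside the index box {0..<m} x {0..<n}
  (0-based indices). This is needed because the widths d_j vary with j and H
  is arbitrary, so dimensions cannot be types.\<close>

type_synonym mat = "nat \<Rightarrow> nat \<Rightarrow> real"

definition mats :: "nat \<Rightarrow> nat \<Rightarrow> mat set" where
  "mats m n = {A. \<forall>i j. (m \<le> i \<or> n \<le> j) \<longrightarrow> A i j = 0}"

definition zmat :: mat where "zmat = (\<lambda>i j. 0)"

definition ident :: "nat \<Rightarrow> mat" where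
  "ident n = (\<lambda>i j. if i = j \<and> i < n then 1 else 0)"

definition madd :: "mat \<Rightarrow> mat \<Rightarrow> mat" where
  "madd A B = (\<lambda>i j. A i j + B i j)"

definition msub :: "mat \<Rightarrow> mat \<Rightarrow> mat" where
  "msub A B = (\<lambda>i j. A i j - B i j)"

definition mmul :: "nat \<Rightarrow> mat \<Rightarrow> mat \<Rightarrow> mat" where
  "mmul p A B = (\<lambda>i j. \<Sum>k<p. A i k * B k j)"

definition frob_inner :: "nat \<Rightarrow> nat \<Rightarrow> mat \<Rightarrow> mat \<Rightarrow> real" where
  "frob_inner m n A B = (\<Sum>i<m. \<Sum>j<n. A i j * B i j)"

definition frob_norm :: "nat \<Rightarrow> nat \<Rightarrow> mat \<Rightarrow> real" where
  "frob_norm m n A = sqrt (frob_inner m n A A)"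

definition mat_has_grad :: "nat \<Rightarrow> nat \<Rightarrow> (mat \<Rightarrow> real) \<Rightarrow> mat \<Rightarrow> mat \<Rightarrow> bool" where
  "mat_has_grad m n f G M \<longleftrightarrow> G \<in> mats m n \<and>
     (\<forall>e>0. \<exists>\<delta>>0. \<forall>E\<in>mats m n. frob_norm m n E < \<delta> \<longrightarrow>
        \<bar>f (madd M E) - f M - frob_inner m n G E\<bar> \<le> e * frob_norm m n E)"

definition mat_differentiable :: "nat \<Rightarrow> nat \<Rightarrow> (mat \<Rightarrow> real) \<Rightarrow> bool" where
  "mat_differentiable m n f \<longleftrightarrow> (\<forall>M\<in>mats m n. \<exists>G. mat_has_grad m n f G M)"

definition mat_grad :: "nat \<Rightarrow> nat \<Rightarrow> (mat \<Rightarrow> real) \<Rightarrow> mat \<Rightarrow> mat" where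
  "mat_grad m n f M = (SOME G. mat_has_grad m n f G M)"

definition mat_local_min :: "nat \<Rightarrow> nat \<Rightarrow> (mat \<Rightarrow> real) \<Rightarrow> mat \<Rightarrow> bool" where
  "mat_local_min m n f M \<longleftrightarrow> (\<exists>\<epsilon>>0. \<forall>X\<in>mats m n. frob_norm m n (msub X M) < \<epsilon> \<longrightarrow> f M \<le> f X)"

definition mat_local_max :: "nat \<Rightarrow> nat \<Rightarrow> (mat \<Rightarrow> real) \<Rightarrow> mat \<Rightarrow> bool" where
  "mat_local_max m n f M \<longleftrightarrow> (\<exists>\<epsilon>>0. \<forall>X\<in>mats m n. frob_norm m n (msub X M) < \<epsilon> \<longrightarrow> f X \<le> f M)"

definition mat_global_min :: "nat \<Rightarrow> nat \<Rightarrow> (mat \<Rightarrow> real) \<Rightarrow> mat \<Rightarrow> bool" where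
  "mat_global_min m n f M \<longleftrightarrow> (\<forall>X\<in>mats m n. f M \<le> f X)"

definition mat_global_max :: "nat \<Rightarrow> nat \<Rightarrow> (mat \<Rightarrow> real) \<Rightarrow> mat \<Rightarrow> bool" where
  "mat_global_max m n f M \<longleftrightarrow> (\<forall>X\<in>mats m n. f X \<le> f M)"

definition full_row_rank :: "nat \<Rightarrow> nat \<Rightarrow> mat \<Rightarrow> bool" where
  "full_row_rank m n A \<longleftrightarrow>
     (\<forall>c::nat \<Rightarrow> real. (\<forall>j<n. (\<Sum>i<m. c i * A i j) = 0) \<longrightarrow> (\<forall>i<m. c i = 0))"

definition full_col_rank :: "nat \<Rightarrow> nat \<Rightarrow> mat \<Rightarrow> bool" where
  "full_col_rank m n A \<longleftrightarrow>
     (\<forall>c::nat \<Rightarrow> real. (\<forall>i<m. (\<Sum>j<n. A i j * c j) = 0) \<longrightarrow> (\<forall>j<n. c j = 0))"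

definition params :: "(nat \<Rightarrow> nat) \<Rightarrow> nat \<Rightarrow> (nat \<Rightarrow> mat) set" where
  "params d H = {W. (\<forall>j\<in>{1..H+1}. W j \<in> mats (d j) (d (j - 1))) \<and>
                    (\<forall>j. j \<notin> {1..H+1} \<longrightarrow> W j = zmat)}"

definition pnorm :: "(nat \<Rightarrow> nat) \<Rightarrow> nat \<Rightarrow> (nat \<Rightarrow> mat) \<Rightarrow> (nat \<Rightarrow> mat) \<Rightarrow> real" where
  "pnorm d H V W = sqrt (\<Sum>j\<in>{1..H+1}. (frob_norm (d j) (d (j - 1)) (msub (V j) (W j))) ^ 2)"

text \<open>seg d W j k = W_{j+k-1} ... W_j, i.e. W_{i:j} = seg d W j (i+1-j);
  in particular seg d W j 0 = W_{j-1:j} = I (of size d_{j-1}).\<close>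
fun seg :: "(nat \<Rightarrow> nat) \<Rightarrow> (nat \<Rightarrow> mat) \<Rightarrow> nat \<Rightarrow> nat \<Rightarrow> mat" where
  "seg d W j 0 = ident (d (j - 1))"
| "seg d W j (Suc k) = mmul (d (j + k - 1)) (W (j + k)) (seg d W j k)"

definition p_local_min :: "(nat \<Rightarrow> nat) \<Rightarrow> nat \<Rightarrow> ((nat \<Rightarrow> mat) \<Rightarrow> real) \<Rightarrow> (nat \<Rightarrow> mat) \<Rightarrow> bool" where
  "p_local_min d H L W \<longleftrightarrow> (\<exists>\<epsilon>>0. \<forall>V\<in>params d H. pnorm d H V W < \<epsilon> \<longrightarrow> L W \<le> L V)"

definition p_local_max :: "(nat \<Rightarrow> nat) \<Rightarrow> nat \<Rightarrow> ((nat \<Rightarrow> mat) \<Rightarrow> real) \<Rightarrow> (nat \<Rightarrow> mat) \<Rightarrow> bool" where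
  "p_local_max d H L W \<longleftrightarrow> (\<exists>\<epsilon>>0. \<forall>V\<in>params d H. pnorm d H V W < \<epsilon> \<longrightarrow> L V \<le> L W)"

definition p_global_min :: "(nat \<Rightarrow> nat) \<Rightarrow> nat \<Rightarrow> ((nat \<Rightarrow> mat) \<Rightarrow> real) \<Rightarrow> (nat \<Rightarrow> mat) \<Rightarrow> bool" where
  "p_global_min d H L W \<longleftrightarrow> (\<forall>V\<in>params d H. L W \<le> L V)"

definition p_global_max :: "(nat \<Rightarrow> nat) \<Rightarrow> nat \<Rightarrow> ((nat \<Rightarrow> mat) \<Rightarrow> real) \<Rightarrow> (nat \<Rightarrow> mat) \<Rightarrow> bool" where
  "p_global_max d H L W \<longleftrightarrow> (\<forall>V\<in>params d H. L V \<le> L W)"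

definition p_critical :: "(nat \<Rightarrow> nat) \<Rightarrow> nat \<Rightarrow> ((nat \<Rightarrow> mat) \<Rightarrow> real) \<Rightarrow> (nat \<Rightarrow> mat) \<Rightarrow> bool" where
  "p_critical d H L W \<longleftrightarrow>
     (\<forall>j\<in>{1..H+1}. mat_has_grad (d j) (d (j - 1)) (\<lambda>X. L (W(j := X))) zmat (W j))"

definition p_saddle :: "(nat \<Rightarrow> nat) \<Rightarrow> nat \<Rightarrow> ((nat \<Rightarrow> mat) \<Rightarrow> real) \<Rightarrow> (nat \<Rightarrow> mat) \<Rightarrow> bool" where
  "p_saddle d H L W \<longleftrightarrow> p_critical d H L W \<and> \<not> p_local_min d H L W \<and> \<not> p_local_max d H L W"

end

theory Submission
  imports Defs "HOL-Analysis.L2_Norm"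
begin

text \<open>Write P = W_{H+1:1} for the product and R = \<nabla>\<ell>_0(P). Changing only layer k by E
  changes the product by F E B, where F = W_{H+1:k+1} and B = W_{k-1:1}; hence at a critical point
  F^T R B^T = 0 for every k. If F has full row rank and B full column rank for one k, this
  forces R = 0, and every product near P is then reached by changing layer k alone, so local
  optimality of \<ell> passes to \<ell>_0.

  At a local extremum of \<ell> the identity F^T R B^T = 0 holds even at every nearby parameter tuple
  with the same product, since such tuples are local extrema as well. Suppose d_y is the
  smallest width and let k be least with W_{H+1:k+1} of full row rank, so that R W_{k-1:1}^T = 0.
  Below k the product M = W_{H+1:m+1} above layer m is rank deficient and no taller than wide,
  so M n = 0 for some n \<noteq> 0; replacing W_m by W_m + t n e_c^T keeps the product, and comparing
  R W_{m:1}^T = 0 before and after shows R W_{m-1:1}^T = 0. Descending to the input gives R = 0;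
  a smallest input width is handled symmetrically. Thus \<nabla>\<ell>_0(P) \<noteq> 0 forces a saddle point.
  Finally, the width condition makes the product map onto, which gives the global statements.\<close>

section \<open>Matrices with explicit dimensions\<close>

lemma matsD: "A \<in> mats m n \<Longrightarrow> m \<le> i \<or> n \<le> j \<Longrightarrow> A i j = 0"
  by (auto simp: mats_def)

lemma zmat_mats [simp]: "zmat \<in> mats m n"
  by (simp add: mats_def zmat_def)

lemma mats_mono: "A \<in> mats m n \<Longrightarrow> m \<le> m' \<Longrightarrow> n \<le> n' \<Longrightarrow> A \<in> mats m' n'"
  by (auto simp: mats_def)

lemma ident_mats: "c \<le> m \<Longrightarrow> c \<le> n \<Longrightarrow> ident c \<in> mats m n"
  by (auto simp: mats_def ident_def)

lemma mats_eq_zmatI: "R \<in> mats m n \<Longrightarrow> \<forall>a<m. \<forall>b<n. R a b = 0 \<Longrightarrow> R = zmat"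
  by (intro ext) (metis matsD not_le zmat_def)

lemma mmul_mats: "A \<in> mats m q \<Longrightarrow> B \<in> mats r n \<Longrightarrow> mmul p A B \<in> mats m n"
  by (auto simp: mats_def mmul_def)

lemma mmul_assoc: "mmul p (mmul q A B) C = mmul q A (mmul p B C)"
proof (intro ext)
  fix i j
  have "mmul p (mmul q A B) C i j = (\<Sum>k<p. \<Sum>l<q. A i l * B l k * C k j)"
    by (simp add: mmul_def sum_distrib_right)
  also have "\<dots> = (\<Sum>l<q. \<Sum>k<p. A i l * B l k * C k j)"
    by (rule sum.swap)
  also have "\<dots> = mmul q A (mmul p B C) i j"
    by (simp add: mmul_def sum_distrib_left mult.assoc)
  finally show "mmul p (mmul q A B) C i j = mmul q A (mmul p B C) i j" .
qed

lemma sum_ident_right: "j < n \<Longrightarrow> (\<Sum>b<n. R i b * ident n j b) = R i j"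
  by (simp add: ident_def if_distrib[of "\<lambda>x. R i _ * x"] eq_commute[of j] cong: if_cong)

lemma sum_ident_left: "j < n \<Longrightarrow> (\<Sum>a<n. ident n a j * R a b) = R j b"
  by (simp add: ident_def if_distrib[of "\<lambda>x. x * R _ b"] cong: if_cong)

lemma mmul_ident_left: "c \<le> p \<Longrightarrow> B \<in> mats c k \<Longrightarrow> mmul p (ident c) B = B"
proof (intro ext)
  fix i j assume cp: "c \<le> p" and B: "B \<in> mats c k"
  have "mmul p (ident c) B i j = (\<Sum>l<p. if l = i then (if i < c then B l j else 0) else 0)"
    unfolding mmul_def ident_def by (rule sum.cong) auto
  also have "\<dots> = (if i < c then B i j else 0)"
    using cp by auto
  also have "\<dots> = B i j" using B by (auto simp: mats_def)
  finally show "mmul p (ident c) B i j = B i j" .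
qed

lemma mmul_ident_right: "c \<le> p \<Longrightarrow> A \<in> mats k c \<Longrightarrow> mmul p A (ident c) = A"
proof (intro ext)
  fix i j assume cp: "c \<le> p" and A: "A \<in> mats k c"
  have "mmul p A (ident c) i j = (\<Sum>l<p. if l = j then (if j < c then A i l else 0) else 0)"
    unfolding mmul_def ident_def by (rule sum.cong) auto
  also have "\<dots> = (if j < c then A i j else 0)"
    using cp by auto
  also have "\<dots> = A i j" using A by (auto simp: mats_def)
  finally show "mmul p A (ident c) i j = A i j" .
qed

lemma mmul_add_scaled_left:
  "mmul q (\<lambda>i j. X i j + t * N i j) B = (\<lambda>i j. mmul q X B i j + t * mmul q N B i j)"
  by (simp add: mmul_def algebra_simps sum.distrib sum_distrib_left)

lemma mmul_add_scaled_right: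
  "mmul q A (\<lambda>i j. X i j + t * N i j) = (\<lambda>i j. mmul q A X i j + t * mmul q A N i j)"
  by (simp add: mmul_def algebra_simps sum.distrib sum_distrib_left)

lemma mmul_scale_left: "mmul q (\<lambda>i j. t * N i j) B = (\<lambda>i j. t * mmul q N B i j)"
  by (simp add: mmul_def sum_distrib_left mult_ac)

lemma mmul_scale_right: "mmul q A (\<lambda>i j. t * N i j) = (\<lambda>i j. t * mmul q A N i j)"
  by (simp add: mmul_def sum_distrib_left mult_ac)

definition tr :: "mat \<Rightarrow> mat" where "tr A = (\<lambda>i j. A j i)"

definition emat :: "nat \<Rightarrow> nat \<Rightarrow> mat" where
  "emat p q = (\<lambda>i j. if i = p \<and> j = q then 1 else 0)"

lemma mmul_emat: "p < a \<Longrightarrow> q < b \<Longrightarrow> mmul a F (mmul b (emat p q) B) = (\<lambda>i j. F i p * B q j)"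
proof (intro ext)
  fix i j assume pa: "p < a" and qb: "q < b"
  have "mmul b (emat p q) B l j = (if l = p then B q j else 0)" for l
    using qb by (simp add: mmul_def emat_def if_distrib[of "\<lambda>x. x * _"] cong: if_cong)
  then show "mmul a F (mmul b (emat p q) B) i j = F i p * B q j"
    using pa by (simp add: mmul_def if_distrib[of "\<lambda>x. _ * x"] cong: if_cong)
qed

text \<open>\<open>\<lambda>a b. n a * (if b = c then 1 else 0)\<close> is the rank-one matrix n e_c^T, and
  \<open>\<lambda>a b. (if a = c then 1 else 0) * n b\<close> is e_c n^T.\<close>

lemma mmul_outer_left:
  "c < q \<Longrightarrow> mmul q (\<lambda>a b. n a * (if b = c then 1 else 0)) B = (\<lambda>i j. n i * B c j)"
proof (intro ext)
  fix i j assume c: "c < q"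
  have "mmul q (\<lambda>a b. n a * (if b = c then 1 else 0)) B i j = (\<Sum>l<q. if l = c then n i * B c j else 0)"
    unfolding mmul_def by (rule sum.cong) auto
  then show "mmul q (\<lambda>a b. n a * (if b = c then 1 else 0)) B i j = n i * B c j"
    using c by simp
qed

lemma mmul_outer_right:
  "c < q \<Longrightarrow> mmul q A (\<lambda>a b. (if a = c then 1 else 0) * n b) = (\<lambda>i j. A i c * n j)"
proof (intro ext)
  fix i j assume c: "c < q"
  have "mmul q A (\<lambda>a b. (if a = c then 1 else 0) * n b) i j = (\<Sum>l<q. if l = c then A i c * n j else 0)"
    unfolding mmul_def by (rule sum.cong) auto
  then show "mmul q A (\<lambda>a b. (if a = c then 1 else 0) * n b) i j = A i c * n j"
    using c by simp
qed

lemma mmul_kernel_outer: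
  assumes "M \<in> mats r e" "\<forall>i<r. (\<Sum>l<e. M i l * n l) = 0"
  shows "mmul e M (\<lambda>a b. n a * (if b = c then 1 else 0)) = (\<lambda>i j. 0)"
proof (intro ext)
  fix i j
  have "mmul e M (\<lambda>a b. n a * (if b = c then 1 else 0)) i j = (if j = c then (\<Sum>l<e. M i l * n l) else 0)"
    by (simp add: mmul_def)
  then show "mmul e M (\<lambda>a b. n a * (if b = c then 1 else 0)) i j = 0"
    using assms by (cases "i < r") (auto simp: mats_def)
qed

lemma mmul_outer_cokernel:
  assumes "M \<in> mats e r" "\<forall>j<r. (\<Sum>l<e. M l j * n l) = 0"
  shows "mmul e (\<lambda>a b. (if a = c then 1 else 0) * n b) M = (\<lambda>i j. 0)"
proof (intro ext)
  fix i j
  have "mmul e (\<lambda>a b. (if a = c then 1 else 0) * n b) M i j = (if i = c then (\<Sum>l<e. M l j * n l) else 0)"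
    by (simp add: mmul_def mult.commute)
  then show "mmul e (\<lambda>a b. (if a = c then 1 else 0) * n b) M i j = 0"
    using assms by (cases "j < r") (auto simp: mats_def)
qed

lemma frob_norm_L2: "frob_norm m n A = L2_set (\<lambda>x. A (fst x) (snd x)) ({..<m} \<times> {..<n})"
  unfolding frob_norm_def frob_inner_def L2_set_def
  by (simp add: sum.cartesian_product power2_eq_square case_prod_beta)

lemma frob_norm_nonneg [simp]: "0 \<le> frob_norm m n A"
  by (simp add: frob_norm_L2)

lemma frob_norm_triangle: "frob_norm m n (\<lambda>i j. A i j + B i j) \<le> frob_norm m n A + frob_norm m n B"
  unfolding frob_norm_L2 by (rule L2_set_triangle_ineq)

lemma frob_norm_scale: "frob_norm m n (\<lambda>i j. t * A i j) = \<bar>t\<bar> * frob_norm m n A"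
  unfolding frob_norm_L2 L2_set_def
  by (simp add: power_mult_distrib real_sqrt_mult flip: sum_distrib_left)

lemma frob_norm_emat: "p < m \<Longrightarrow> q < n \<Longrightarrow> frob_norm m n (emat p q) = 1"
proof -
  assume pq: "p < m" "q < n"
  have "frob_inner m n (emat p q) (emat p q) = (\<Sum>i<m. if i = p then 1 else 0)"
    unfolding frob_inner_def emat_def
    by (rule sum.cong) (use pq in \<open>auto simp: if_distrib cong: if_cong\<close>)
  then show ?thesis using pq by (simp add: frob_norm_def)
qed

lemma frob_inner_scale: "frob_inner m n R (\<lambda>i j. t * K i j) = t * frob_inner m n R K"
  by (simp add: frob_inner_def sum_distrib_left mult_ac)

lemma mmul_entry_sq_le: "(mmul p A B i j)\<^sup>2 \<le> (\<Sum>k<p. (A i k)\<^sup>2) * (\<Sum>k<p. (B k j)\<^sup>2)"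
proof -
  have "\<bar>mmul p A B i j\<bar> \<le> (\<Sum>k<p. \<bar>A i k\<bar> * \<bar>B k j\<bar>)"
    unfolding mmul_def by (rule order_trans[OF sum_abs]) (simp add: abs_mult)
  also have "\<dots> \<le> L2_set (\<lambda>k. A i k) {..<p} * L2_set (\<lambda>k. B k j) {..<p}"
    by (rule L2_set_mult_ineq)
  finally have "\<bar>mmul p A B i j\<bar>\<^sup>2 \<le> (L2_set (\<lambda>k. A i k) {..<p} * L2_set (\<lambda>k. B k j) {..<p})\<^sup>2"
    by (rule power_mono) simp
  then show ?thesis
    by (simp add: power_mult_distrib L2_set_def sum_nonneg)
qed

lemma frob_norm_mmul_le: "frob_norm m n (mmul p A B) \<le> frob_norm m p A * frob_norm p n B"
proof -
  have "frob_inner m n (mmul p A B) (mmul p A B)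
      \<le> (\<Sum>i<m. \<Sum>j<n. (\<Sum>k<p. (A i k)\<^sup>2) * (\<Sum>k<p. (B k j)\<^sup>2))"
    unfolding frob_inner_def
    by (intro sum_mono) (simp add: mmul_entry_sq_le flip: power2_eq_square)
  also have "\<dots> = (\<Sum>i<m. \<Sum>k<p. (A i k)\<^sup>2) * (\<Sum>k<p. \<Sum>j<n. (B k j)\<^sup>2)"
    by (simp add: sum_product sum.swap[of _ "{..<n}"])
  also have "\<dots> = frob_inner m p A A * frob_inner p n B B"
    unfolding frob_inner_def by (simp add: power2_eq_square)
  finally show ?thesis
    unfolding frob_norm_def by (simp add: real_sqrt_mult[symmetric])
qed

lemma full_row_rank_ident: "full_row_rank n n (ident n)"
  unfolding full_row_rank_def
  by (simp add: ident_def if_distrib[of "\<lambda>x. _ * x"] cong: if_cong)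

lemma full_col_rank_ident: "full_col_rank n n (ident n)"
  unfolding full_col_rank_def
  by (simp add: ident_def if_distrib[of "\<lambda>x. x * _"] cong: if_cong)

lemma not_full_row_rank_mmul:
  assumes "\<not> full_row_rank r n M"
  shows "\<not> full_row_rank r k (mmul n M A)"
proof -
  obtain c where c: "\<forall>j<n. (\<Sum>i<r. c i * M i j) = 0" "\<exists>i<r. c i \<noteq> 0"
    using assms unfolding full_row_rank_def by blast
  have "(\<Sum>i<r. c i * mmul n M A i j) = (\<Sum>l<n. (\<Sum>i<r. c i * M i l) * A l j)" for j
    by (simp add: mmul_def sum_distrib_left sum_distrib_right mult_ac sum.swap[of _ "{..<n}"])
  with c show ?thesis
    unfolding full_row_rank_def by auto
qed

lemma not_full_col_rank_mmul:
  assumes "\<not> full_col_rank n k M"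
  shows "\<not> full_col_rank r k (mmul n A M)"
proof -
  obtain c where c: "\<forall>i<n. (\<Sum>j<k. M i j * c j) = 0" "\<exists>j<k. c j \<noteq> 0"
    using assms unfolding full_col_rank_def by blast
  have "(\<Sum>j<k. mmul n A M i j * c j) = (\<Sum>l<n. A i l * (\<Sum>j<k. M l j * c j))" for i
    by (simp add: mmul_def sum_distrib_left sum_distrib_right mult_ac sum.swap[of _ "{..<n}"])
  with c show ?thesis
    unfolding full_col_rank_def by auto
qed

lemma full_row_rank_tr: "full_row_rank n m (tr B) \<longleftrightarrow> full_col_rank m n B"
  unfolding full_row_rank_def full_col_rank_def tr_def by (simp add: mult.commute)

lemma exists_nonzero_kernel_vector:
  fixes X :: "'a \<Rightarrow> 'b \<Rightarrow> real"
  assumes "finite I" "finite S" "card I < card S"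
  shows "\<exists>n. (\<exists>j\<in>S. n j \<noteq> 0) \<and> (\<forall>j. j \<notin> S \<longrightarrow> n j = 0) \<and> (\<forall>i\<in>I. (\<Sum>j\<in>S. X i j * n j) = 0)"
  using assms
proof (induction I arbitrary: S X rule: finite_induct)
  case empty
  then obtain s where s: "s \<in> S" by fastforce
  show ?case by (rule exI[of _ "\<lambda>j. if j = s then 1 else 0"]) (use s in auto)
next
  case (insert r I)
  show ?case
  proof (cases "\<forall>j\<in>S. X r j = 0")
    case True
    obtain n where n: "\<exists>j\<in>S. n j \<noteq> 0" "\<forall>j. j \<notin> S \<longrightarrow> n j = 0" "\<forall>i\<in>I. (\<Sum>j\<in>S. X i j * n j) = 0"
      using insert.IH[of S X] insert.prems insert.hyps by auto
    show ?thesis using n True by (intro exI[of _ n]) auto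
  next
    case False
    then obtain c where c: "c \<in> S" "X r c \<noteq> 0" by auto
    \<comment> \<open>Gaussian elimination of the unknown \<open>n c\<close> by means of row \<open>r\<close>.\<close>
    define Y where "Y = (\<lambda>i j. X i j - X i c * X r j / X r c)"
    have cardS: "card I < card (S - {c})" using insert.prems insert.hyps c by auto
    obtain w where w: "\<exists>j\<in>S - {c}. w j \<noteq> 0" "\<forall>j. j \<notin> S - {c} \<longrightarrow> w j = 0"
        "\<forall>i\<in>I. (\<Sum>j\<in>S - {c}. Y i j * w j) = 0"
      using insert.IH[of "S - {c}" Y] cardS insert.prems by auto
    define t where "t = - (\<Sum>j\<in>S - {c}. X r j * w j) / X r c"
    define n where "n = w(c := t)"
    have sumS: "(\<Sum>j\<in>S. X i j * n j) = X i c * t + (\<Sum>j\<in>S - {c}. X i j * w j)" for i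
    proof -
      have "(\<Sum>j\<in>S. X i j * n j) = X i c * n c + (\<Sum>j\<in>S - {c}. X i j * n j)"
        using c insert.prems by (simp add: sum.remove)
      also have "(\<Sum>j\<in>S - {c}. X i j * n j) = (\<Sum>j\<in>S - {c}. X i j * w j)"
        by (rule sum.cong) (auto simp: n_def)
      finally show ?thesis by (simp add: n_def)
    qed
    have rowI: "(\<Sum>j\<in>S. X i j * n j) = 0" if i: "i \<in> I" for i
    proof -
      have "0 = (\<Sum>j\<in>S - {c}. Y i j * w j)" using w i by auto
      also have "\<dots> = (\<Sum>j\<in>S - {c}. X i j * w j) - X i c / X r c * (\<Sum>j\<in>S - {c}. X r j * w j)"
        by (simp add: Y_def algebra_simps sum_subtractf sum_distrib_left)
      finally have "(\<Sum>j\<in>S - {c}. X i j * w j) = - X i c * t"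
        using c by (simp add: t_def field_simps)
      then show ?thesis by (simp add: sumS)
    qed
    have rowr: "(\<Sum>j\<in>S. X r j * n j) = 0"
      using c by (simp add: sumS t_def)
    show ?thesis
    proof (intro exI[of _ n] conjI)
      show "\<exists>j\<in>S. n j \<noteq> 0" using w(1) by (auto simp: n_def)
      show "\<forall>j. j \<notin> S \<longrightarrow> n j = 0" using w(2) c by (auto simp: n_def)
      show "\<forall>i\<in>insert r I. (\<Sum>j\<in>S. X i j * n j) = 0" using rowI rowr by auto
    qed
  qed
qed

text \<open>One row depends on the others, and the remaining r - 1 < e rows have a common nonzero
  kernel vector, which then also annihilates the dependent row.\<close>

lemma rank_deficient_kernel_vector:
  assumes "r \<le> e" "\<not> full_row_rank r e X"
  shows "\<exists>n. (\<exists>j<e. n j \<noteq> 0) \<and> (\<forall>j. e \<le> j \<longrightarrow> n j = 0) \<and> (\<forall>i<r. (\<Sum>j<e. X i j * n j) = 0)"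
proof -
  obtain v p where v: "p < r" "v p \<noteq> 0" "\<forall>j<e. (\<Sum>i<r. v i * X i j) = 0"
    using assms(2) unfolding full_row_rank_def by blast
  let ?I = "{..<r} - {p}"
  have "card ?I < card {..<e}" using assms v by (simp add: card_Diff_singleton)
  then obtain n where n: "\<exists>j\<in>{..<e}. n j \<noteq> 0" "\<forall>j. j \<notin> {..<e} \<longrightarrow> n j = 0"
      "\<forall>i\<in>?I. (\<Sum>j\<in>{..<e}. X i j * n j) = 0"
    using exists_nonzero_kernel_vector[of ?I "{..<e}" X] by auto
  have split: "v p * X p j = - (\<Sum>i\<in>?I. v i * X i j)" if "j < e" for j
  proof -
    have "(\<Sum>i<r. v i * X i j) = v p * X p j + (\<Sum>i\<in>?I. v i * X i j)"
      using v by (simp add: sum.remove)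
    then show ?thesis using v(3)[rule_format, OF that] by linarith
  qed
  have "v p * (\<Sum>j<e. X p j * n j) = (\<Sum>j<e. (v p * X p j) * n j)"
    by (simp add: sum_distrib_left mult.assoc)
  also have "\<dots> = (\<Sum>j<e. (- (\<Sum>i\<in>?I. v i * X i j)) * n j)"
    using split by (intro sum.cong) auto
  also have "\<dots> = - (\<Sum>i\<in>?I. v i * (\<Sum>j<e. X i j * n j))"
    by (simp add: sum_distrib_left sum_distrib_right sum_negf mult.assoc sum.swap[of _ "{..<e}"])
  also have "\<dots> = 0" using n(3) by simp
  finally have "(\<Sum>j<e. X p j * n j) = 0" using v by simp
  with n show ?thesis by auto
qed

lemma rank_deficient_cokernel_vector:
  assumes "k \<le> n" "\<not> full_col_rank n k M"
  shows "\<exists>c. (\<exists>i<n. c i \<noteq> 0) \<and> (\<forall>i. n \<le> i \<longrightarrow> c i = 0) \<and> (\<forall>j<k. (\<Sum>i<n. M i j * c i) = 0)"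
  using rank_deficient_kernel_vector[of k n "tr M"] assms unfolding full_row_rank_tr
  by (simp add: tr_def)

lemma sum_gram_quadratic_form:
  fixes w :: "nat \<Rightarrow> real" and A :: "nat \<Rightarrow> nat \<Rightarrow> real"
  shows "(\<Sum>i<m. w i * (\<Sum>j<m. (\<Sum>k<n. A i k * A j k) * w j)) = (\<Sum>k<n. (\<Sum>i<m. w i * A i k)\<^sup>2)"
proof -
  have "(\<Sum>i<m. w i * (\<Sum>j<m. (\<Sum>k<n. A i k * A j k) * w j))
      = (\<Sum>i<m. \<Sum>j<m. \<Sum>k<n. (w i * A i k) * (w j * A j k))"
    by (simp add: sum_distrib_left sum_distrib_right mult_ac)
  also have "\<dots> = (\<Sum>k<n. \<Sum>i<m. \<Sum>j<m. (w i * A i k) * (w j * A j k))"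
    by (simp add: sum.swap[of _ "{..<n}"])
  also have "\<dots> = (\<Sum>k<n. (\<Sum>i<m. w i * A i k)\<^sup>2)"
    by (simp add: power2_eq_square sum_product)
  finally show ?thesis .
qed

text \<open>With G = A A^T, a nonzero kernel vector w = (w', w_m) of the m \<times> (m + 1) matrix (G | b) has
  w_m \<noteq> 0, since G w' = 0 gives w'^T A = 0; then x = - A^T w' / w_m solves A x = b.\<close>

lemma full_row_rank_solvable:
  assumes "full_row_rank m n A"
  shows "\<exists>x. (\<forall>k. n \<le> k \<longrightarrow> x k = 0) \<and> (\<forall>i<m. (\<Sum>k<n. A i k * x k) = b i)"
proof -
  define G where "G = (\<lambda>i j. \<Sum>k<n. A i k * A j k)"
  define X where "X = (\<lambda>i j. if j < m then G i j else b i)"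
  have "card {..<m} < card {..<m+1}" by simp
  then obtain w where w: "\<exists>j\<in>{..<m+1}. w j \<noteq> 0" "\<forall>i\<in>{..<m}. (\<Sum>j\<in>{..<m+1}. X i j * w j) = 0"
    using exists_nonzero_kernel_vector[of "{..<m}" "{..<m+1}" X] by auto
  have eq: "(\<Sum>j<m. G i j * w j) + b i * w m = 0" if "i < m" for i
    using w(2) that by (simp add: X_def)
  have wm: "w m \<noteq> 0"
  proof
    assume wm0: "w m = 0"
    then have "(\<Sum>k<n. (\<Sum>i<m. w i * A i k)\<^sup>2) = 0"
      using eq sum_gram_quadratic_form[where m=m and w=w and n=n and A=A] by (simp add: G_def)
    then have "\<forall>k<n. (\<Sum>i<m. w i * A i k) = 0"
      by (subst (asm) sum_nonneg_eq_0_iff) auto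
    then have "\<forall>i<m. w i = 0" using assms unfolding full_row_rank_def by blast
    then show False using w(1) wm0 by (auto simp: less_Suc_eq)
  qed
  define x where "x = (\<lambda>k. if k < n then - (\<Sum>j<m. A j k * w j) / w m else 0)"
  have "(\<Sum>k<n. A i k * x k) = b i" if "i < m" for i
  proof -
    have "(\<Sum>k<n. A i k * x k) = - (\<Sum>k<n. \<Sum>j<m. A i k * A j k * w j) / w m"
      by (simp add: x_def sum_distrib_left sum_divide_distrib mult.assoc sum_negf)
    also have "\<dots> = - (\<Sum>j<m. G i j * w j) / w m"
      by (simp add: G_def sum_distrib_right sum.swap[of _ "{..<m}"])
    also have "\<dots> = b i" using eq[OF that] wm by (simp add: field_simps)
    finally show ?thesis .
  qed
  then show ?thesis by (intro exI[of _ x]) (auto simp: x_def)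
qed

lemma full_row_rank_right_inverse:
  assumes "full_row_rank m n A" "A \<in> mats m n"
  shows "\<exists>Y. Y \<in> mats n m \<and> mmul n A Y = ident m"
proof -
  have "\<forall>i. \<exists>x. (\<forall>k. n \<le> k \<longrightarrow> x k = 0) \<and> (\<forall>i'<m. (\<Sum>k<n. A i' k * x k) = (if i' = i then 1 else 0))"
  proof
    fix i
    show "\<exists>x. (\<forall>k. n \<le> k \<longrightarrow> x k = 0) \<and> (\<forall>i'<m. (\<Sum>k<n. A i' k * x k) = (if i' = i then 1 else 0))"
      using full_row_rank_solvable[OF assms(1), of "\<lambda>i'. if i' = i then 1 else 0"] by simp
  qed
  then obtain f where "\<forall>i. (\<forall>k. n \<le> k \<longrightarrow> f i k = 0) \<and>
      (\<forall>i'<m. (\<Sum>k<n. A i' k * f i k) = (if i' = i then 1 else 0))"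
    by (rule choice[THEN exE])
  then have f: "\<And>i k. n \<le> k \<Longrightarrow> f i k = 0"
      "\<And>i i'. i' < m \<Longrightarrow> (\<Sum>k<n. A i' k * f i k) = (if i' = i then 1 else 0)"
    by auto
  define Y where "Y = (\<lambda>k i. if i < m then f i k else 0)"
  have "Y \<in> mats n m" using f(1) by (auto simp: mats_def Y_def)
  moreover have "mmul n A Y i i' = ident m i i'" for i i'
  proof (cases "i < m \<and> i' < m")
    case True then show ?thesis using f(2)[of i i'] by (simp add: mmul_def Y_def ident_def)
  next
    case False then show ?thesis
      using matsD[OF assms(2)] by (auto simp: mmul_def Y_def ident_def)
  qed
  ultimately show ?thesis by blast
qed

lemma full_col_rank_left_inverse:
  assumes "full_col_rank m n B" "B \<in> mats m n"
  shows "\<exists>Z. Z \<in> mats n m \<and> mmul m Z B = ident n"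
proof -
  have "tr B \<in> mats n m" using assms(2) by (auto simp: mats_def tr_def)
  then obtain Y where Y: "Y \<in> mats m n" "mmul m (tr B) Y = ident n"
    using full_row_rank_right_inverse assms(1) full_row_rank_tr by blast
  have "mmul m (tr Y) B i j = mmul m (tr B) Y j i" for i j
    by (simp add: mmul_def tr_def mult.commute)
  then have "mmul m (tr Y) B = ident n"
    using Y(2) by (intro ext) (auto simp: ident_def)
  moreover have "tr Y \<in> mats n m" using Y(1) by (auto simp: mats_def tr_def)
  ultimately show ?thesis by blast
qed

section \<open>Products of consecutive layers\<close>

definition shaped :: "(nat \<Rightarrow> nat) \<Rightarrow> (nat \<Rightarrow> mat) \<Rightarrow> bool" where
  "shaped d W \<longleftrightarrow> (\<forall>i. W i \<in> mats (d i) (d (i - 1)))"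

lemma params_shaped: "W \<in> params d H \<Longrightarrow> shaped d W"
  unfolding shaped_def params_def by (metis (mono_tags, lifting) mem_Collect_eq zmat_mats)

lemma shaped_fun_upd: "shaped d W \<Longrightarrow> X \<in> mats (d k) (d (k - 1)) \<Longrightarrow> shaped d (W(k := X))"
  by (auto simp: shaped_def)

lemma params_fun_upd:
  "W \<in> params d H \<Longrightarrow> k \<in> {1..H+1} \<Longrightarrow> X \<in> mats (d k) (d (k - 1)) \<Longrightarrow> W(k := X) \<in> params d H"
  by (auto simp: params_def)

lemma seg_mats: "shaped d W \<Longrightarrow> 1 \<le> j \<Longrightarrow> seg d W j a \<in> mats (d (j + a - 1)) (d (j - 1))"
proof (induction a)
  case 0
  then show ?case by (simp add: ident_mats)
next
  case (Suc a)
  have "W (j + a) \<in> mats (d (j + a)) (d (j + a - 1))" using Suc.prems by (simp add: shaped_def)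
  then show ?case using Suc by (auto intro: mmul_mats)
qed

lemma seg_params_mats: "W \<in> params d H \<Longrightarrow> seg d W 1 (H + 1) \<in> mats (d (H + 1)) (d 0)"
  using seg_mats[OF params_shaped, of W d H 1 "H + 1"] by simp

lemma seg_cong: "(\<And>i. j \<le> i \<Longrightarrow> i < j + a \<Longrightarrow> W i = V i) \<Longrightarrow> seg d W j a = seg d V j a"
  by (induction a) auto

lemma seg_fun_upd_above: "k < j \<Longrightarrow> seg d (W(k := X)) j n = seg d W j n"
  by (rule seg_cong) auto

lemma seg_fun_upd_below: "seg d (W(k := X)) 1 (k - 1) = seg d W 1 (k - 1)"
  by (rule seg_cong) auto

lemma mmul_layer_ident: "shaped d W \<Longrightarrow> mmul (d (j - 1)) (W j) (ident (d (j - 1))) = W j"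
  by (rule mmul_ident_right) (auto simp: shaped_def)

lemma seg_one: "shaped d W \<Longrightarrow> seg d W j 1 = W j"
  by (simp add: mmul_layer_ident[of d W j, simplified])

lemma seg_add:
  "shaped d W \<Longrightarrow> 1 \<le> j \<Longrightarrow> seg d W j (a + b) = mmul (d (j + a - 1)) (seg d W (j + a) b) (seg d W j a)"
proof (induction b)
  case 0
  then show ?case using seg_mats[OF 0(1,2), of a] by (simp add: mmul_ident_left)
next
  case (Suc b)
  then show ?case by (simp add: mmul_assoc add.assoc)
qed

lemma seg_split:
  "shaped d V \<Longrightarrow> m \<le> H + 1 \<Longrightarrow>
   seg d V 1 (H + 1) = mmul (d m) (seg d V (m + 1) (H + 1 - m)) (seg d V 1 m)"
  using seg_add[of d V 1 m "H + 1 - m"] by (simp add: add.commute)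

lemma seg_split_layer:
  assumes "shaped d W" "1 \<le> k" "k \<le> H + 1"
  shows "seg d W 1 (H + 1) =
    mmul (d k) (seg d W (k + 1) (H + 1 - k)) (mmul (d (k - 1)) (W k) (seg d W 1 (k - 1)))"
proof -
  have e: "k - 1 + 1 = k" "H + 1 - (k - 1) = 1 + (H + 1 - k)" "k + 1 - 1 = k" using assms by auto
  have "k - 1 \<le> H + 1" using assms by simp
  from seg_split[OF assms(1) this]
  have "seg d W 1 (H + 1) = mmul (d (k - 1)) (seg d W k (1 + (H + 1 - k))) (seg d W 1 (k - 1))"
    unfolding e .
  also have "seg d W k (1 + (H + 1 - k)) = mmul (d k) (seg d W (k + 1) (H + 1 - k)) (W k)"
    using seg_add[OF assms(1,2), of 1 "H + 1 - k"] by (simp only: e seg_one[OF assms(1)])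
  finally show ?thesis by (simp only: mmul_assoc)
qed

lemma seg_fun_upd_layer:
  assumes "shaped d W" "X \<in> mats (d k) (d (k - 1))" "1 \<le> k" "k \<le> H + 1"
  shows "seg d (W(k := X)) 1 (H + 1) =
    mmul (d k) (seg d W (k + 1) (H + 1 - k)) (mmul (d (k - 1)) X (seg d W 1 (k - 1)))"
proof -
  have "seg d (W(k := X)) 1 (H + 1) = mmul (d k) (seg d (W(k := X)) (k + 1) (H + 1 - k))
      (mmul (d (k - 1)) ((W(k := X)) k) (seg d (W(k := X)) 1 (k - 1)))"
    using shaped_fun_upd[OF assms(1,2)] assms(3,4) by (rule seg_split_layer)
  then show ?thesis
    by (simp only: seg_fun_upd_below seg_fun_upd_above[of k "k + 1"] fun_upd_same less_add_one)
qed

lemma seg_madd_layer: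
  assumes "shaped d W" "\<Delta> \<in> mats (d k) (d (k - 1))" "1 \<le> k" "k \<le> H + 1"
  shows "seg d (W(k := madd (W k) \<Delta>)) 1 (H + 1) = madd (seg d W 1 (H + 1))
    (mmul (d k) (seg d W (k + 1) (H + 1 - k)) (mmul (d (k - 1)) \<Delta> (seg d W 1 (k - 1))))"
proof -
  have "madd (W k) \<Delta> \<in> mats (d k) (d (k - 1))"
    using assms(1,2) by (auto simp: shaped_def mats_def madd_def)
  then show ?thesis
    using seg_fun_upd_layer[OF assms(1) _ assms(3,4)] seg_split_layer[OF assms(1,3,4)]
      mmul_add_scaled_left[where t = 1] mmul_add_scaled_right[where t = 1]
    by (simp add: madd_def)
qed

lemma seg_Suc_lowest:
  "shaped d V \<Longrightarrow> n \<le> H \<Longrightarrow>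
   seg d V (Suc n) (H + 1 - n) = mmul (d (Suc n)) (seg d V (Suc (Suc n)) (H - n)) (V (Suc n))"
  using seg_add[of d V "Suc n" 1 "H - n"] mmul_layer_ident[of d V "Suc n"] by (simp add: Suc_diff_le)

declare seg.simps(2) [simp del]

lemma seg_1_Suc: "seg d V 1 (Suc m) = mmul (d m) (V (Suc m)) (seg d V 1 m)"
  by (simp add: seg.simps(2))

lemma pnorm_L2: "pnorm d H V W = L2_set (\<lambda>j. frob_norm (d j) (d (j - 1)) (msub (V j) (W j))) {1..H+1}"
  by (simp add: pnorm_def L2_set_def)

lemma pnorm_nonneg [simp]: "0 \<le> pnorm d H V W"
  by (simp add: pnorm_L2)

lemma pnorm_self [simp]: "pnorm d H W W = 0"
  by (simp add: pnorm_def msub_def frob_norm_def frob_inner_def)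

lemma pnorm_triangle: "pnorm d H V U \<le> pnorm d H V W + pnorm d H W U"
proof -
  have "frob_norm (d j) (d (j - 1)) (msub (V j) (U j))
      \<le> frob_norm (d j) (d (j - 1)) (msub (V j) (W j)) + frob_norm (d j) (d (j - 1)) (msub (W j) (U j))" for j
    using frob_norm_triangle[of "d j" "d (j - 1)" "msub (V j) (W j)" "msub (W j) (U j)"]
    by (simp add: msub_def)
  then have "pnorm d H V U \<le> L2_set (\<lambda>j. frob_norm (d j) (d (j - 1)) (msub (V j) (W j)) +
          frob_norm (d j) (d (j - 1)) (msub (W j) (U j))) {1..H+1}"
    unfolding pnorm_L2 by (intro L2_set_mono) auto
  also have "\<dots> \<le> pnorm d H V W + pnorm d H W U"
    unfolding pnorm_L2 by (rule L2_set_triangle_ineq)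
  finally show ?thesis .
qed

lemma pnorm_fun_upd:
  assumes "k \<in> {1..H+1}"
  shows "pnorm d H (V(k := X)) V = frob_norm (d k) (d (k - 1)) (msub X (V k))"
proof -
  have "pnorm d H (V(k := X)) V
      = L2_set (\<lambda>j. if j = k then frob_norm (d k) (d (k - 1)) (msub X (V k)) else 0) {1..H+1}"
    unfolding pnorm_L2 by (rule L2_set_cong) (auto simp: msub_def frob_norm_def frob_inner_def)
  also have "\<dots> = frob_norm (d k) (d (k - 1)) (msub X (V k))"
    using assms by (simp add: L2_set_def if_distrib[of "\<lambda>x. x\<^sup>2"] cong: if_cong)
  finally show ?thesis .
qed

lemma frob_norm_layer_le_pnorm:
  "k \<in> {1..H+1} \<Longrightarrow> frob_norm (d k) (d (k - 1)) (msub (V k) (W k)) \<le> pnorm d H V W"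
  unfolding pnorm_L2 by (rule member_le_L2_set) auto

lemma small_layer_perturbation:
  assumes V: "V \<in> params d H" and k: "k \<in> {1..H+1}" and N: "N \<in> mats (d k) (d (k - 1))"
    and near: "pnorm d H V W < \<delta> / 2" and \<delta>: "\<delta> > 0"
  obtains t where "t > 0" and "V(k := madd (V k) (\<lambda>i j. t * N i j)) \<in> params d H"
    and "pnorm d H (V(k := madd (V k) (\<lambda>i j. t * N i j))) W < \<delta>"
proof
  define f where "f = frob_norm (d k) (d (k - 1)) N"
  define t where "t = \<delta> / (2 * (f + 1))"
  have f0: "f \<ge> 0" by (simp add: f_def)
  show t0: "t > 0" using \<delta> f0 by (simp add: t_def)
  have "t * f < \<delta> / 2"
    using \<delta> f0 by (simp add: t_def field_simps)
  let ?X = "madd (V k) (\<lambda>i j. t * N i j)"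
  have "?X \<in> mats (d k) (d (k - 1))"
    using params_shaped[OF V] N by (auto simp: shaped_def mats_def madd_def)
  then show "V(k := ?X) \<in> params d H" by (rule params_fun_upd[OF V k])
  have "pnorm d H (V(k := ?X)) V = t * f"
    using t0 by (simp add: pnorm_fun_upd[OF k] msub_def madd_def frob_norm_scale f_def)
  then show "pnorm d H (V(k := ?X)) W < \<delta>"
    using pnorm_triangle[of d H "V(k := ?X)" W V] near \<open>t * f < \<delta> / 2\<close> by linarith
qed

section \<open>Derivatives along single layers\<close>

lemma has_grad_inner_one_sided_bound:
  assumes grad: "mat_has_grad m n f R P" and K: "K \<in> mats m n" and s: "s = 1 \<or> s = -1"
    and lb: "\<forall>e>0. \<exists>\<tau>>0. \<forall>t. 0 < \<bar>t\<bar> \<and> \<bar>t\<bar> < \<tau> \<longrightarrow>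
               - e * \<bar>t\<bar> \<le> s * (f (madd P (\<lambda>i j. t * K i j)) - f P)"
    and e: "e > 0"
  shows "\<bar>frob_inner m n R K\<bar> \<le> e * (1 + frob_norm m n K)"
proof -
  define g where "g = frob_inner m n R K"
  define c where "c = frob_norm m n K"
  have c0: "0 \<le> c" by (simp add: c_def)
  obtain \<delta> where \<delta>: "\<delta> > 0" "\<forall>E\<in>mats m n. frob_norm m n E < \<delta> \<longrightarrow>
      \<bar>f (madd P E) - f P - frob_inner m n R E\<bar> \<le> e * frob_norm m n E"
    using grad e unfolding mat_has_grad_def by blast
  obtain \<tau> where \<tau>: "\<tau> > 0" "\<forall>t. 0 < \<bar>t\<bar> \<and> \<bar>t\<bar> < \<tau> \<longrightarrow>
      - e * \<bar>t\<bar> \<le> s * (f (madd P (\<lambda>i j. t * K i j)) - f P)"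
    using lb e by blast
  define a where "a = \<delta> / (c + 1)"
  define u where "u = min \<tau> a / 2"
  have "0 < a" using \<delta> c0 by (simp add: a_def)
  then have u0: "u > 0" and ut: "u < \<tau>" and "u < a"
    using \<tau>(1) min.cobounded1[of \<tau> a] min.cobounded2[of \<tau> a] by (auto simp: u_def)
  then have "u * (c + 1) < \<delta>" using c0 by (simp add: a_def field_simps)
  then have uc: "u * c < \<delta>" using u0 by (simp add: algebra_simps)
  have est: "\<bar>f (madd P (\<lambda>i j. t * K i j)) - f P - t * g\<bar> \<le> e * (u * c)"
    and one_sided: "- e * u \<le> s * (f (madd P (\<lambda>i j. t * K i j)) - f P)" if t: "\<bar>t\<bar> = u" for t
  proof -
    have Em: "(\<lambda>i j. t * K i j) \<in> mats m n" using K by (simp add: mats_def)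
    have fr: "frob_norm m n (\<lambda>i j. t * K i j) = u * c" using t by (simp add: frob_norm_scale c_def)
    show "\<bar>f (madd P (\<lambda>i j. t * K i j)) - f P - t * g\<bar> \<le> e * (u * c)"
      using \<delta>(2)[rule_format, OF Em] fr uc by (simp add: frob_inner_scale g_def)
    show "- e * u \<le> s * (f (madd P (\<lambda>i j. t * K i j)) - f P)"
      using \<tau>(2)[rule_format, of t] t u0 ut by simp
  qed
  define fp where "fp = f (madd P (\<lambda>i j. u * K i j)) - f P"
  define fm where "fm = f (madd P (\<lambda>i j. - u * K i j)) - f P"
  have "\<bar>fp - u * g\<bar> \<le> e * (u * c)" "\<bar>fm + u * g\<bar> \<le> e * (u * c)" "- e * u \<le> s * fp" "- e * u \<le> s * fm"
    using est[of u] est[of "- u"] one_sided[of u] one_sided[of "- u"] u0 by (simp_all add: fp_def fm_def)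
  then have "\<bar>u * g\<bar> \<le> e * u + e * (u * c)"
    using s by (auto simp: abs_le_iff)
  then have "u * \<bar>g\<bar> \<le> u * (e * (1 + c))" using u0 by (simp add: abs_mult algebra_simps)
  then show ?thesis using u0 by (simp add: g_def c_def)
qed

lemma has_grad_inner_zero_if_one_sided:
  assumes grad: "mat_has_grad m n f R P" and K: "K \<in> mats m n" and s: "s = 1 \<or> s = -1"
    and lb: "\<forall>e>0. \<exists>\<tau>>0. \<forall>t. 0 < \<bar>t\<bar> \<and> \<bar>t\<bar> < \<tau> \<longrightarrow>
               - e * \<bar>t\<bar> \<le> s * (f (madd P (\<lambda>i j. t * K i j)) - f P)"
  shows "frob_inner m n R K = 0"
proof (rule ccontr)
  let ?g = "\<bar>frob_inner m n R K\<bar>" and ?c = "frob_norm m n K"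
  assume "frob_inner m n R K \<noteq> 0"
  then have g0: "?g > 0" by simp
  have pos: "0 < 2 * (1 + ?c)" by (simp add: add_pos_nonneg)
  with g0 have "?g / (2 * (1 + ?c)) > 0" by (rule divide_pos_pos)
  then have "?g \<le> ?g / (2 * (1 + ?c)) * (1 + ?c)"
    by (rule has_grad_inner_one_sided_bound[OF grad K s lb])
  also have "\<dots> = ?g / 2" using pos by (simp add: field_simps)
  finally show False using g0 by simp
qed

text \<open>\<open>layer_dir d H W k p q\<close> = W_{H+1:k+1} e_p e_q^T W_{k-1:1} is the direction in which the product
  moves when entry (p, q) of layer k moves.\<close>

definition layer_dir :: "(nat \<Rightarrow> nat) \<Rightarrow> nat \<Rightarrow> (nat \<Rightarrow> mat) \<Rightarrow> nat \<Rightarrow> nat \<Rightarrow> nat \<Rightarrow> mat" where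
  "layer_dir d H W k p q = (\<lambda>i j. seg d W (k + 1) (H + 1 - k) i p * seg d W 1 (k - 1) q j)"

lemma layer_dir_mats:
  assumes "shaped d W" "1 \<le> k" "k \<le> H + 1"
  shows "layer_dir d H W k p q \<in> mats (d (H + 1)) (d 0)"
  using seg_mats[OF assms(1), of "k + 1" "H + 1 - k"] seg_mats[OF assms(1), of 1 "k - 1"] assms
  by (auto simp: mats_def layer_dir_def)

lemma seg_perturb_layer:
  assumes W: "shaped d W" and k: "1 \<le> k" "k \<le> H + 1" and pq: "p < d k" "q < d (k - 1)"
  shows "seg d (W(k := madd (W k) (\<lambda>i j. t * emat p q i j))) 1 (H + 1)
       = madd (seg d W 1 (H + 1)) (\<lambda>i j. t * layer_dir d H W k p q i j)"
proof -
  have "(\<lambda>i j. t * emat p q i j) \<in> mats (d k) (d (k - 1))"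
    using pq by (auto simp: mats_def emat_def)
  then show ?thesis
    using seg_madd_layer[OF W _ k] mmul_emat[OF pq] by (simp add: layer_dir_def mmul_scale_left mmul_scale_right)
qed

lemma frob_inner_layer_dir_rows:
  "frob_inner m n R (layer_dir d H V k p q) =
   (\<Sum>a<m. (\<Sum>b<n. R a b * seg d V 1 (k - 1) q b) * seg d V (k + 1) (H + 1 - k) a p)"
  unfolding frob_inner_def layer_dir_def
  by (rule sum.cong[OF refl]) (simp add: sum_distrib_left sum_distrib_right mult_ac)

lemma frob_inner_layer_dir_cols:
  "frob_inner m n R (layer_dir d H V k p q) =
   (\<Sum>b<n. seg d V 1 (k - 1) q b * (\<Sum>a<m. seg d V (k + 1) (H + 1 - k) a p * R a b))"
  by (simp add: frob_inner_def layer_dir_def sum_distrib_left sum_distrib_right mult_ac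
      sum.swap[of _ "{..<n}"])

lemma layer_dir_orth_full_row_rank:
  assumes full: "full_row_rank (d (H + 1)) (d k) (seg d V (k + 1) (H + 1 - k))"
    and orth: "\<forall>p<d k. frob_inner (d (H + 1)) (d 0) R (layer_dir d H V k p q) = 0" and a: "a < d (H + 1)"
  shows "(\<Sum>b<d 0. R a b * seg d V 1 (k - 1) q b) = 0"
proof -
  have "\<forall>p<d k. (\<Sum>a<d (H + 1). (\<Sum>b<d 0. R a b * seg d V 1 (k - 1) q b) * seg d V (k + 1) (H + 1 - k) a p) = 0"
    using orth by (simp only: frob_inner_layer_dir_rows)
  then show ?thesis
    using full[unfolded full_row_rank_def, rule_format, of "\<lambda>a. \<Sum>b<d 0. R a b * seg d V 1 (k - 1) q b"] a
    by blast
qed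

lemma layer_dir_orth_full_col_rank:
  assumes full: "full_col_rank (d (k - 1)) (d 0) (seg d V 1 (k - 1))"
    and orth: "\<forall>q<d (k - 1). frob_inner (d (H + 1)) (d 0) R (layer_dir d H V k p q) = 0" and b: "b < d 0"
  shows "(\<Sum>a<d (H + 1). seg d V (k + 1) (H + 1 - k) a p * R a b) = 0"
proof -
  have "\<forall>q<d (k - 1). (\<Sum>b<d 0. seg d V 1 (k - 1) q b * (\<Sum>a<d (H + 1). seg d V (k + 1) (H + 1 - k) a p * R a b)) = 0"
    using orth by (simp only: frob_inner_layer_dir_cols)
  then show ?thesis
    using full[unfolded full_col_rank_def, rule_format, of "\<lambda>b. \<Sum>a<d (H + 1). seg d V (k + 1) (H + 1 - k) a p * R a b"] b
    by blast
qed

lemma critical_orth_layer_dir: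
  assumes W: "W \<in> params d H" and crit: "p_critical d H (\<lambda>W. f (seg d W 1 (H + 1))) W"
    and grad: "mat_has_grad (d (H + 1)) (d 0) f R (seg d W 1 (H + 1))"
    and k: "k \<in> {1..H+1}" and pq: "p < d k" "q < d (k - 1)"
  shows "frob_inner (d (H + 1)) (d 0) R (layer_dir d H W k p q) = 0"
proof (rule has_grad_inner_zero_if_one_sided[OF grad _ disjI1[OF refl]])
  have L: "shaped d W" and k1: "1 \<le> k" "k \<le> H + 1" using params_shaped[OF W] k by auto
  then show "layer_dir d H W k p q \<in> mats (d (H + 1)) (d 0)" by (rule layer_dir_mats)
  have cg: "mat_has_grad (d k) (d (k - 1)) (\<lambda>X. f (seg d (W(k := X)) 1 (H + 1))) zmat (W k)"
    using crit k unfolding p_critical_def by blast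
  show "\<forall>e>0. \<exists>\<tau>>0. \<forall>t. 0 < \<bar>t\<bar> \<and> \<bar>t\<bar> < \<tau> \<longrightarrow> - e * \<bar>t\<bar> \<le>
      1 * (f (madd (seg d W 1 (H + 1)) (\<lambda>i j. t * layer_dir d H W k p q i j)) - f (seg d W 1 (H + 1)))"
  proof (intro allI impI)
    fix e :: real assume "e > 0"
    then obtain \<delta> where \<delta>: "\<delta> > 0" "\<forall>E\<in>mats (d k) (d (k - 1)). frob_norm (d k) (d (k - 1)) E < \<delta> \<longrightarrow>
        \<bar>f (seg d (W(k := madd (W k) E)) 1 (H + 1)) - f (seg d (W(k := W k)) 1 (H + 1))
          - frob_inner (d k) (d (k - 1)) zmat E\<bar> \<le> e * frob_norm (d k) (d (k - 1)) E"
      using cg unfolding mat_has_grad_def by blast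
    have "- e * \<bar>t\<bar> \<le> f (madd (seg d W 1 (H + 1)) (\<lambda>i j. t * layer_dir d H W k p q i j)) - f (seg d W 1 (H + 1))"
      if t: "\<bar>t\<bar> < \<delta>" for t
    proof -
      have "(\<lambda>i j. t * emat p q i j) \<in> mats (d k) (d (k - 1))"
        using pq by (auto simp: mats_def emat_def)
      moreover have "frob_norm (d k) (d (k - 1)) (\<lambda>i j. t * emat p q i j) = \<bar>t\<bar>"
        using pq by (simp add: frob_norm_scale frob_norm_emat)
      ultimately show ?thesis
        using \<delta>(2) t seg_perturb_layer[OF L k1 pq, of t] by (force simp: frob_inner_def zmat_def)
    qed
    then show "\<exists>\<tau>>0. \<forall>t. 0 < \<bar>t\<bar> \<and> \<bar>t\<bar> < \<tau> \<longrightarrow> - e * \<bar>t\<bar> \<le>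
      1 * (f (madd (seg d W 1 (H + 1)) (\<lambda>i j. t * layer_dir d H W k p q i j)) - f (seg d W 1 (H + 1)))"
      using \<delta>(1) by auto
  qed
qed

text \<open>The sign s = 1 encodes a local minimum, s = -1 a local maximum.\<close>

lemma extremum_orth_layer_dir:
  assumes W: "W \<in> params d H" and s: "s = 1 \<or> s = -1"
    and ext: "\<exists>\<epsilon>>0. \<forall>V\<in>params d H. pnorm d H V W < \<epsilon> \<longrightarrow>
                s * f (seg d W 1 (H + 1)) \<le> s * f (seg d V 1 (H + 1))"
    and grad: "mat_has_grad (d (H + 1)) (d 0) f R (seg d W 1 (H + 1))"
    and k: "k \<in> {1..H+1}" and pq: "p < d k" "q < d (k - 1)"
  shows "frob_inner (d (H + 1)) (d 0) R (layer_dir d H W k p q) = 0"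
proof (rule has_grad_inner_zero_if_one_sided[OF grad _ s])
  have L: "shaped d W" and k1: "1 \<le> k" "k \<le> H + 1" using params_shaped[OF W] k by auto
  then show "layer_dir d H W k p q \<in> mats (d (H + 1)) (d 0)" by (rule layer_dir_mats)
  obtain \<epsilon> where \<epsilon>: "\<epsilon> > 0" "\<forall>V\<in>params d H. pnorm d H V W < \<epsilon> \<longrightarrow>
      s * f (seg d W 1 (H + 1)) \<le> s * f (seg d V 1 (H + 1))"
    using ext by blast
  have nonneg: "0 \<le> s * (f (madd (seg d W 1 (H + 1)) (\<lambda>i j. t * layer_dir d H W k p q i j)) - f (seg d W 1 (H + 1)))"
    if t: "\<bar>t\<bar> < \<epsilon>" for t
  proof -
    let ?X = "madd (W k) (\<lambda>i j. t * emat p q i j)"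
    have "?X \<in> mats (d k) (d (k - 1))"
      using L pq unfolding shaped_def by (auto simp: mats_def madd_def emat_def)
    then have V: "W(k := ?X) \<in> params d H" by (rule params_fun_upd[OF W k])
    have "pnorm d H (W(k := ?X)) W = \<bar>t\<bar>"
      using pq by (simp add: pnorm_fun_upd[OF k] msub_def madd_def frob_norm_scale frob_norm_emat)
    then have "s * f (seg d W 1 (H + 1)) \<le> s * f (seg d (W(k := ?X)) 1 (H + 1))"
      using \<epsilon>(2) V t by simp
    then show ?thesis
      using seg_perturb_layer[OF L k1 pq, of t] by (simp add: algebra_simps)
  qed
  show "\<forall>e>0. \<exists>\<tau>>0. \<forall>t. 0 < \<bar>t\<bar> \<and> \<bar>t\<bar> < \<tau> \<longrightarrow> - e * \<bar>t\<bar> \<le>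
      s * (f (madd (seg d W 1 (H + 1)) (\<lambda>i j. t * layer_dir d H W k p q i j)) - f (seg d W 1 (H + 1)))"
  proof (intro allI impI exI[of _ \<epsilon>] conjI)
    fix e t :: real assume "e > 0" "0 < \<bar>t\<bar> \<and> \<bar>t\<bar> < \<epsilon>"
    moreover have "- e * \<bar>t\<bar> \<le> 0" using \<open>e > 0\<close> by simp
    ultimately show "- e * \<bar>t\<bar> \<le> s * (f (madd (seg d W 1 (H + 1))
        (\<lambda>i j. t * layer_dir d H W k p q i j)) - f (seg d W 1 (H + 1)))"
      using nonneg[of t] by linarith
  qed (rule \<epsilon>(1))
qed

section \<open>The gradient vanishes at local extrema\<close>

definition orth_on_fibre :: "(nat \<Rightarrow> nat) \<Rightarrow> nat \<Rightarrow> (nat \<Rightarrow> mat) \<Rightarrow> mat \<Rightarrow> real \<Rightarrow> bool" where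
  "orth_on_fibre d H W R \<delta> \<longleftrightarrow>
    (\<forall>V\<in>params d H. pnorm d H V W < \<delta> \<longrightarrow> seg d V 1 (H + 1) = seg d W 1 (H + 1) \<longrightarrow>
      (\<forall>k\<in>{1..H+1}. \<forall>p<d k. \<forall>q<d (k - 1).
         frob_inner (d (H + 1)) (d 0) R (layer_dir d H V k p q) = 0))"

lemma orth_on_fibre_at_extremum:
  assumes W: "W \<in> params d H" and s: "s = 1 \<or> s = -1" and \<epsilon>: "\<epsilon> > 0"
    and ext: "\<forall>V\<in>params d H. pnorm d H V W < \<epsilon> \<longrightarrow>
                s * f (seg d W 1 (H + 1)) \<le> s * f (seg d V 1 (H + 1))"
    and grad: "mat_has_grad (d (H + 1)) (d 0) f R (seg d W 1 (H + 1))"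
  shows "orth_on_fibre d H W R (\<epsilon> / 2)"
  unfolding orth_on_fibre_def
proof (intro ballI impI allI)
  fix V k p q assume V: "V \<in> params d H" and near: "pnorm d H V W < \<epsilon> / 2"
    and P: "seg d V 1 (H + 1) = seg d W 1 (H + 1)"
    and k: "k \<in> {1..H+1}" and p: "p < d k" and q: "q < d (k - 1)"
  have "pnorm d H V' W < \<epsilon>" if "pnorm d H V' V < \<epsilon> / 2" for V'
    using that near pnorm_triangle[of d H V' W V] by linarith
  \<comment> \<open>\<open>V\<close> is again a local extremum, since it has the same product as \<open>W\<close>.\<close>
  then have "\<forall>V'\<in>params d H. pnorm d H V' V < \<epsilon> / 2 \<longrightarrow>
      s * f (seg d V 1 (H + 1)) \<le> s * f (seg d V' 1 (H + 1))"
    using ext P by simp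
  moreover have "\<epsilon> / 2 > 0" using \<epsilon> by simp
  ultimately have "\<exists>\<epsilon>'>0. \<forall>V'\<in>params d H. pnorm d H V' V < \<epsilon>' \<longrightarrow>
      s * f (seg d V 1 (H + 1)) \<le> s * f (seg d V' 1 (H + 1))"
    by blast
  then show "frob_inner (d (H + 1)) (d 0) R (layer_dir d H V k p q) = 0"
    by (rule extremum_orth_layer_dir[OF V s _ _ k p q]) (use grad P in simp)
qed

definition annihilates_lower :: "(nat \<Rightarrow> nat) \<Rightarrow> nat \<Rightarrow> (nat \<Rightarrow> mat) \<Rightarrow> mat \<Rightarrow> real \<Rightarrow> nat \<Rightarrow> mat \<Rightarrow> bool"
  where "annihilates_lower d H W R \<delta> m M \<longleftrightarrow>
    (\<forall>V\<in>params d H. (\<forall>j>m. V j = W j) \<longrightarrow> pnorm d H V W < \<delta> \<longrightarrow>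
        mmul (d m) M (seg d V 1 m) = mmul (d m) M (seg d W 1 m) \<longrightarrow>
        (\<forall>i<d (H + 1). \<forall>c<d m. (\<Sum>b<d 0. R i b * seg d V 1 m c b) = 0))"

text \<open>Adding t n e_c^T with M n = 0 to layer m + 1 moves V_{m+1:1} only within the kernel of M,
  and moves its row r by t n_r times row c of V_{m:1}.\<close>

lemma kernel_perturbation:
  assumes V: "V \<in> params d H" and layer: "Suc m \<in> {1..H+1}" and near: "pnorm d H V W < \<delta> / 2"
    and \<delta>: "\<delta> > 0" and M: "M \<in> mats e (d (Suc m))" and n: "\<forall>j. d (Suc m) \<le> j \<longrightarrow> n j = 0"
    and Mn: "\<forall>i<e. (\<Sum>j<d (Suc m). M i j * n j) = 0" and c: "c < d m"
  obtains t Vt where "t > 0" "Vt \<in> params d H" "pnorm d H Vt W < \<delta>" "\<forall>j. j \<noteq> Suc m \<longrightarrow> Vt j = V j"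
    "mmul (d (Suc m)) M (seg d Vt 1 (Suc m)) = mmul (d (Suc m)) M (seg d V 1 (Suc m))"
    "seg d Vt 1 (Suc m) = (\<lambda>a b. seg d V 1 (Suc m) a b + t * (n a * seg d V 1 m c b))"
proof -
  define N where "N = (\<lambda>a b. n a * (if b = c then 1 else 0 :: real))"
  have "N \<in> mats (d (Suc m)) (d (Suc m - 1))" using n c by (auto simp: mats_def N_def)
  then obtain t where t: "t > 0" "V(Suc m := madd (V (Suc m)) (\<lambda>a b. t * N a b)) \<in> params d H"
    "pnorm d H (V(Suc m := madd (V (Suc m)) (\<lambda>a b. t * N a b))) W < \<delta>"
    using small_layer_perturbation[OF V layer _ near \<delta>] by blast
  define X where "X = madd (V (Suc m)) (\<lambda>a b. t * N a b)"
  have seg_Vt: "seg d (V(Suc m := X)) 1 (Suc m) = mmul (d m) X (seg d V 1 m)"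
    using seg_1_Suc[of d "V(Suc m := X)" m] seg_fun_upd_below[of d V "Suc m"] by simp
  have "mmul (d (Suc m)) M X = mmul (d (Suc m)) M (V (Suc m))"
    unfolding X_def madd_def mmul_add_scaled_right N_def mmul_kernel_outer[OF M Mn] by simp
  then have "mmul (d (Suc m)) M (seg d (V(Suc m := X)) 1 (Suc m)) = mmul (d (Suc m)) M (seg d V 1 (Suc m))"
    unfolding seg_Vt seg_1_Suc[of d V m] mmul_assoc[symmetric] by simp
  moreover have "mmul (d m) X (seg d V 1 m)
      = (\<lambda>a b. mmul (d m) (V (Suc m)) (seg d V 1 m) a b + t * (n a * seg d V 1 m c b))"
    unfolding X_def madd_def mmul_add_scaled_left N_def mmul_outer_left[OF c] ..
  then have "seg d (V(Suc m := X)) 1 (Suc m) = (\<lambda>a b. seg d V 1 (Suc m) a b + t * (n a * seg d V 1 m c b))"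
    unfolding seg_Vt seg_1_Suc[of d V m] .
  ultimately show ?thesis using that[of t "V(Suc m := X)"] t by (simp add: X_def)
qed

lemma annihilates_lower_step:
  assumes W: "W \<in> params d H" and m: "Suc m \<le> H" and wide: "d (H + 1) \<le> d (Suc m)"
    and M: "M \<in> mats (d (H + 1)) (d (Suc m))" and deficient: "\<not> full_row_rank (d (H + 1)) (d (Suc m)) M"
    and \<delta>: "\<delta> > 0" and ann: "annihilates_lower d H W R \<delta> (Suc m) M"
  shows "annihilates_lower d H W R (\<delta> / 2) m (mmul (d (Suc m)) M (W (Suc m)))"
  unfolding annihilates_lower_def
proof (intro ballI impI allI)
  let ?dy = "d (H + 1)" and ?M' = "mmul (d (Suc m)) M (W (Suc m))"
  fix V i c assume V: "V \<in> params d H" and above: "\<forall>j>m. V j = W j" and near: "pnorm d H V W < \<delta> / 2"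
    and same: "mmul (d m) ?M' (seg d V 1 m) = mmul (d m) ?M' (seg d W 1 m)"
    and i: "i < ?dy" and c: "c < d m"
  obtain n where n: "\<exists>j<d (Suc m). n j \<noteq> 0" "\<forall>j. d (Suc m) \<le> j \<longrightarrow> n j = 0"
      "\<forall>i<?dy. (\<Sum>j<d (Suc m). M i j * n j) = 0"
    using rank_deficient_kernel_vector[OF wide deficient] by blast
  then obtain r where r: "r < d (Suc m)" "n r \<noteq> 0" by blast
  have layer: "Suc m \<in> {1..H+1}" using m by simp
  obtain t Vt where t: "t > 0" and Vt: "Vt \<in> params d H" "pnorm d H Vt W < \<delta>" "\<forall>j. j \<noteq> Suc m \<longrightarrow> Vt j = V j"
    and same_Vt: "mmul (d (Suc m)) M (seg d Vt 1 (Suc m)) = mmul (d (Suc m)) M (seg d V 1 (Suc m))"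
    and seg_Vt: "seg d Vt 1 (Suc m) = (\<lambda>a b. seg d V 1 (Suc m) a b + t * (n a * seg d V 1 m c b))"
    by (rule kernel_perturbation[OF V layer near \<delta> M n(2,3) c])
  have same_V: "mmul (d (Suc m)) M (seg d V 1 (Suc m)) = mmul (d (Suc m)) M (seg d W 1 (Suc m))"
    using same above unfolding seg_1_Suc mmul_assoc[symmetric] by simp
  have ann': "(\<Sum>b<d 0. R i b * seg d U 1 (Suc m) r b) = 0"
    if "U \<in> params d H" "\<forall>j>Suc m. U j = W j" "pnorm d H U W < \<delta>"
      "mmul (d (Suc m)) M (seg d U 1 (Suc m)) = mmul (d (Suc m)) M (seg d W 1 (Suc m))" for U
    using ann that i r(1) unfolding annihilates_lower_def by blast
  have "(\<Sum>b<d 0. R i b * seg d Vt 1 (Suc m) r b) = 0"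
    by (rule ann') (use Vt same_Vt same_V above in auto)
  moreover have "(\<Sum>b<d 0. R i b * seg d V 1 (Suc m) r b) = 0"
    by (rule ann') (use V near same_V above \<delta> in auto)
  ultimately have "t * n r * (\<Sum>b<d 0. R i b * seg d V 1 m c b) = 0"
    unfolding seg_Vt by (simp add: algebra_simps sum.distrib sum_distrib_left)
  then show "(\<Sum>b<d 0. R i b * seg d V 1 m c b) = 0" using t r(2) by simp
qed

lemma annihilates_lower_zero:
  assumes W: "W \<in> params d H" and wid: "\<forall>j\<in>{1..H}. d (H + 1) \<le> d j"
  shows "m \<le> H \<Longrightarrow> M \<in> mats (d (H + 1)) (d m) \<Longrightarrow> (0 < m \<Longrightarrow> \<not> full_row_rank (d (H + 1)) (d m) M) \<Longrightarrow>
    \<delta> > 0 \<Longrightarrow> annihilates_lower d H W R \<delta> m M \<Longrightarrow> \<forall>i<d (H + 1). \<forall>b<d 0. R i b = 0"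
proof (induction m arbitrary: M \<delta>)
  case 0
  then have "\<forall>i<d (H + 1). \<forall>c<d 0. (\<Sum>b<d 0. R i b * ident (d 0) c b) = 0"
    using W unfolding annihilates_lower_def by (force dest: bspec[where x = W])
  then show ?case by (simp add: sum_ident_right)
next
  case (Suc m)
  have WSm: "W (Suc m) \<in> mats (d (Suc m)) (d m)"
    using params_shaped[OF W] unfolding shaped_def by (metis diff_Suc_1)
  show ?case
  proof (rule Suc.IH)
    show "mmul (d (Suc m)) M (W (Suc m)) \<in> mats (d (H + 1)) (d m)"
      using Suc.prems(2) WSm by (rule mmul_mats)
    show "\<not> full_row_rank (d (H + 1)) (d m) (mmul (d (Suc m)) M (W (Suc m)))"
      using Suc.prems(3) by (simp add: not_full_row_rank_mmul)
    show "annihilates_lower d H W R (\<delta> / 2) m (mmul (d (Suc m)) M (W (Suc m)))"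
      using Suc.prems wid by (intro annihilates_lower_step[OF W]) auto
  qed (use Suc.prems in auto)
qed

lemma orth_on_fibre_zero_narrow_output:
  assumes W: "W \<in> params d H" and wid: "\<forall>j\<in>{1..H}. d (H + 1) \<le> d j" and \<delta>: "\<delta> > 0"
    and orth: "orth_on_fibre d H W R \<delta>"
  shows "\<forall>i<d (H + 1). \<forall>b<d 0. R i b = 0"
proof -
  let ?dy = "d (H + 1)"
  note L = params_shaped[OF W]
  define good where "good = (\<lambda>k. 1 \<le> k \<and> k \<le> H + 1 \<and> full_row_rank ?dy (d k) (seg d W (k + 1) (H + 1 - k)))"
  have "good (H + 1)" by (simp add: good_def full_row_rank_ident)
  define k where "k = (LEAST k. good k)"
  have "good k" unfolding k_def by (rule LeastI) fact
  then have k: "1 \<le> k" "k \<le> H + 1" and full: "full_row_rank ?dy (d k) (seg d W (k + 1) (H + 1 - k))"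
    by (auto simp: good_def)
  define m where "m = k - 1"
  have m: "m \<le> H" "k = m + 1" using k by (auto simp: m_def)
  define M where "M = seg d W (m + 1) (H + 1 - m)"
  have "\<not> full_row_rank ?dy (d m) M" if "0 < m"
    using not_less_Least[of m good] that k by (simp add: m_def k_def good_def M_def)
  moreover have "M \<in> mats ?dy (d m)"
    using seg_mats[OF L, of "m + 1" "H + 1 - m"] m by (simp add: M_def)
  moreover have "annihilates_lower d H W R \<delta> m M"
    unfolding annihilates_lower_def
  proof (intro ballI impI allI)
    fix V i c assume V: "V \<in> params d H" and above: "\<forall>j>m. V j = W j" and near: "pnorm d H V W < \<delta>"
      and same: "mmul (d m) M (seg d V 1 m) = mmul (d m) M (seg d W 1 m)" and i: "i < ?dy" and c: "c < d m"
    have "seg d V (m + 1) (H + 1 - m) = M" unfolding M_def by (rule seg_cong) (use above in auto)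
    then have "seg d V 1 (H + 1) = seg d W 1 (H + 1)"
      using same seg_split[OF params_shaped[OF V], of m H] seg_split[OF L, of m H] m by (simp add: M_def)
    then have orth_V: "\<forall>p<d k. frob_inner ?dy (d 0) R (layer_dir d H V k p c) = 0"
      using orth V near k c unfolding orth_on_fibre_def m_def by auto
    have upper: "seg d V (k + 1) (H + 1 - k) = seg d W (k + 1) (H + 1 - k)"
      by (rule seg_cong) (use above m in auto)
    \<comment> \<open>As the upper product has full row rank, F^T R B^T = 0 reduces to R B^T = 0.\<close>
    show "(\<Sum>b<d 0. R i b * seg d V 1 m c b) = 0"
      using layer_dir_orth_full_row_rank[OF full[folded upper] orth_V i] by (simp add: m_def)
  qed
  ultimately show ?thesis using annihilates_lower_zero[OF W wid m(1) _ _ \<delta>] by blast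
qed

definition annihilates_upper :: "(nat \<Rightarrow> nat) \<Rightarrow> nat \<Rightarrow> (nat \<Rightarrow> mat) \<Rightarrow> mat \<Rightarrow> real \<Rightarrow> nat \<Rightarrow> mat \<Rightarrow> bool"
  where "annihilates_upper d H W R \<delta> m M \<longleftrightarrow>
    (\<forall>V\<in>params d H. (\<forall>j\<le>m. V j = W j) \<longrightarrow> pnorm d H V W < \<delta> \<longrightarrow>
        mmul (d m) (seg d V (Suc m) (H + 1 - m)) M = mmul (d m) (seg d W (Suc m) (H + 1 - m)) M \<longrightarrow>
        (\<forall>q<d m. \<forall>b<d 0. (\<Sum>a<d (H + 1). seg d V (Suc m) (H + 1 - m) a q * R a b) = 0))"

lemma cokernel_perturbation:
  assumes V: "V \<in> params d H" and n: "n \<le> H" and near: "pnorm d H V W < \<delta> / 2"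
    and \<delta>: "\<delta> > 0" and M: "M \<in> mats (d n) e" and c: "\<forall>i. d n \<le> i \<longrightarrow> c i = 0"
    and cM: "\<forall>j<e. (\<Sum>i<d n. M i j * c i) = 0" and q: "q < d (Suc n)"
  obtains t Vt where "t > 0" "Vt \<in> params d H" "pnorm d H Vt W < \<delta>" "\<forall>j. j \<noteq> Suc n \<longrightarrow> Vt j = V j"
    "mmul (d n) (seg d Vt (Suc n) (H + 1 - n)) M = mmul (d n) (seg d V (Suc n) (H + 1 - n)) M"
    "seg d Vt (Suc n) (H + 1 - n) =
       (\<lambda>a b. seg d V (Suc n) (H + 1 - n) a b + t * (seg d V (Suc (Suc n)) (H - n) a q * c b))"
proof -
  let ?G = "seg d V (Suc (Suc n)) (H - n)"
  define N where "N = (\<lambda>a k. (if a = q then 1 else 0) * c k :: real)"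
  have layer: "Suc n \<in> {1..H+1}" using n by simp
  have "N \<in> mats (d (Suc n)) (d (Suc n - 1))" using c q by (auto simp: mats_def N_def)
  then obtain t where t: "t > 0" "V(Suc n := madd (V (Suc n)) (\<lambda>a k. t * N a k)) \<in> params d H"
    "pnorm d H (V(Suc n := madd (V (Suc n)) (\<lambda>a k. t * N a k))) W < \<delta>"
    using small_layer_perturbation[OF V layer _ near \<delta>] by blast
  define X where "X = madd (V (Suc n)) (\<lambda>a k. t * N a k)"
  have seg_Vt: "seg d (V(Suc n := X)) (Suc n) (H + 1 - n) = mmul (d (Suc n)) ?G X"
    using seg_Suc_lowest[OF params_shaped[OF t(2)[folded X_def]] n]
      seg_fun_upd_above[of "Suc n" "Suc (Suc n)" d V X] by simp
  have seg_V: "seg d V (Suc n) (H + 1 - n) = mmul (d (Suc n)) ?G (V (Suc n))"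
    using seg_Suc_lowest[OF params_shaped[OF V] n] .
  have "mmul (d n) X M = mmul (d n) (V (Suc n)) M"
    unfolding X_def madd_def mmul_add_scaled_left N_def mmul_outer_cokernel[OF M cM] by simp
  then have "mmul (d n) (seg d (V(Suc n := X)) (Suc n) (H + 1 - n)) M = mmul (d n) (seg d V (Suc n) (H + 1 - n)) M"
    unfolding seg_Vt seg_V mmul_assoc by simp
  moreover have "mmul (d (Suc n)) ?G X = (\<lambda>a k. mmul (d (Suc n)) ?G (V (Suc n)) a k + t * (?G a q * c k))"
    unfolding X_def madd_def mmul_add_scaled_right N_def mmul_outer_right[OF q] ..
  then have "seg d (V(Suc n := X)) (Suc n) (H + 1 - n) =
      (\<lambda>a k. seg d V (Suc n) (H + 1 - n) a k + t * (?G a q * c k))"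
    unfolding seg_Vt seg_V .
  ultimately show ?thesis using that[of t "V(Suc n := X)"] t by (simp add: X_def)
qed

lemma annihilates_upper_step:
  assumes W: "W \<in> params d H" and n: "n \<le> H" and wide: "d 0 \<le> d n"
    and M: "M \<in> mats (d n) (d 0)" and deficient: "\<not> full_col_rank (d n) (d 0) M"
    and \<delta>: "\<delta> > 0" and ann: "annihilates_upper d H W R \<delta> n M"
  shows "annihilates_upper d H W R (\<delta> / 2) (Suc n) (mmul (d n) (W (Suc n)) M)"
  unfolding annihilates_upper_def
proof (intro ballI impI allI)
  let ?dy = "d (H + 1)" and ?M' = "mmul (d n) (W (Suc n)) M"
  fix V q b assume V: "V \<in> params d H" and below: "\<forall>j\<le>Suc n. V j = W j" and near: "pnorm d H V W < \<delta> / 2"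
    and same: "mmul (d (Suc n)) (seg d V (Suc (Suc n)) (H + 1 - Suc n)) ?M'
             = mmul (d (Suc n)) (seg d W (Suc (Suc n)) (H + 1 - Suc n)) ?M'"
    and q: "q < d (Suc n)" and b: "b < d 0"
  obtain c where c: "\<exists>i<d n. c i \<noteq> 0" "\<forall>i. d n \<le> i \<longrightarrow> c i = 0" "\<forall>j<d 0. (\<Sum>i<d n. M i j * c i) = 0"
    using rank_deficient_cokernel_vector[OF wide deficient] by blast
  then obtain r where r: "r < d n" "c r \<noteq> 0" by blast
  obtain t Vt where t: "t > 0" and Vt: "Vt \<in> params d H" "pnorm d H Vt W < \<delta>" "\<forall>j. j \<noteq> Suc n \<longrightarrow> Vt j = V j"
    and same_Vt: "mmul (d n) (seg d Vt (Suc n) (H + 1 - n)) M = mmul (d n) (seg d V (Suc n) (H + 1 - n)) M"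
    and seg_Vt: "seg d Vt (Suc n) (H + 1 - n) =
       (\<lambda>a k. seg d V (Suc n) (H + 1 - n) a k + t * (seg d V (Suc (Suc n)) (H - n) a q * c k))"
    by (rule cokernel_perturbation[OF V n near \<delta> M c(2,3) q])
  have same_V: "mmul (d n) (seg d V (Suc n) (H + 1 - n)) M = mmul (d n) (seg d W (Suc n) (H + 1 - n)) M"
    using same below seg_Suc_lowest[OF params_shaped[OF V] n] seg_Suc_lowest[OF params_shaped[OF W] n]
    by (simp add: mmul_assoc)
  have ann': "(\<Sum>a<?dy. seg d U (Suc n) (H + 1 - n) a r * R a b) = 0"
    if "U \<in> params d H" "\<forall>j\<le>n. U j = W j" "pnorm d H U W < \<delta>"
      "mmul (d n) (seg d U (Suc n) (H + 1 - n)) M = mmul (d n) (seg d W (Suc n) (H + 1 - n)) M" for U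
    using ann that b r(1) unfolding annihilates_upper_def by blast
  have "(\<Sum>a<?dy. seg d Vt (Suc n) (H + 1 - n) a r * R a b) = 0"
    by (rule ann') (use Vt same_Vt same_V below in auto)
  moreover have "(\<Sum>a<?dy. seg d V (Suc n) (H + 1 - n) a r * R a b) = 0"
    by (rule ann') (use V near same_V below \<delta> in auto)
  ultimately have "t * c r * (\<Sum>a<?dy. seg d V (Suc (Suc n)) (H - n) a q * R a b) = 0"
    unfolding seg_Vt by (simp add: algebra_simps sum.distrib sum_distrib_left)
  then show "(\<Sum>a<?dy. seg d V (Suc (Suc n)) (H + 1 - Suc n) a q * R a b) = 0"
    using t r(2) by simp
qed

lemma annihilates_upper_zero:
  assumes W: "W \<in> params d H" and wid: "\<forall>j\<in>{1..H}. d 0 \<le> d j"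
  shows "m \<le> H + 1 \<Longrightarrow> M \<in> mats (d m) (d 0) \<Longrightarrow> (m < H + 1 \<Longrightarrow> \<not> full_col_rank (d m) (d 0) M) \<Longrightarrow>
    \<delta> > 0 \<Longrightarrow> annihilates_upper d H W R \<delta> m M \<Longrightarrow> \<forall>a<d (H + 1). \<forall>b<d 0. R a b = 0"
proof (induction m arbitrary: M \<delta> rule: inc_induct)
  case base
  then have "\<forall>q<d (H + 1). \<forall>b<d 0. (\<Sum>a<d (H + 1). ident (d (H + 1)) a q * R a b) = 0"
    using W unfolding annihilates_upper_def by (force dest: bspec[where x = W])
  then show ?case by (simp add: sum_ident_left)
next
  case (step n)
  have WSn: "W (Suc n) \<in> mats (d (Suc n)) (d n)"
    using params_shaped[OF W] unfolding shaped_def by (metis diff_Suc_1)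
  show ?case
  proof (rule step.IH)
    show "mmul (d n) (W (Suc n)) M \<in> mats (d (Suc n)) (d 0)"
      using WSn step.prems(1) by (rule mmul_mats)
    show "Suc n < H + 1 \<Longrightarrow> \<not> full_col_rank (d (Suc n)) (d 0) (mmul (d n) (W (Suc n)) M)"
      using step.prems(2) step.hyps by (simp add: not_full_col_rank_mmul)
    have "d 0 \<le> d n" using wid step.hyps by (cases n) auto
    then show "annihilates_upper d H W R (\<delta> / 2) (Suc n) (mmul (d n) (W (Suc n)) M)"
      using step.prems step.hyps by (intro annihilates_upper_step[OF W]) auto
  qed (use step.prems in auto)
qed

lemma orth_on_fibre_zero_narrow_input:
  assumes W: "W \<in> params d H" and wid: "\<forall>j\<in>{1..H}. d 0 \<le> d j" and \<delta>: "\<delta> > 0"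
    and orth: "orth_on_fibre d H W R \<delta>"
  shows "\<forall>a<d (H + 1). \<forall>b<d 0. R a b = 0"
proof -
  let ?dy = "d (H + 1)"
  note L = params_shaped[OF W]
  define good where "good = (\<lambda>k. 1 \<le> k \<and> k \<le> H + 1 \<and> full_col_rank (d (k - 1)) (d 0) (seg d W 1 (k - 1)))"
  have "good 1" by (simp add: good_def full_col_rank_ident)
  have bound: "\<And>k. good k \<Longrightarrow> k \<le> H + 1" by (simp add: good_def)
  define k where "k = (GREATEST k. good k)"
  have "good k" unfolding k_def by (rule GreatestI_nat[where P = good, OF \<open>good 1\<close> bound])
  then have k: "1 \<le> k" "k \<le> H + 1" and full: "full_col_rank (d (k - 1)) (d 0) (seg d W 1 (k - 1))"
    by (auto simp: good_def)
  define M where "M = seg d W 1 k"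
  have "\<not> full_col_rank (d k) (d 0) M" if "k < H + 1"
    using Greatest_le_nat[where P = good and k = "k + 1", OF _ bound] that k
    by (auto simp: k_def good_def M_def)
  moreover have "M \<in> mats (d k) (d 0)" using seg_mats[OF L, of 1 k] by (simp add: M_def)
  moreover have "annihilates_upper d H W R \<delta> k M"
    unfolding annihilates_upper_def
  proof (intro ballI impI allI)
    fix V p b assume V: "V \<in> params d H" and below: "\<forall>j\<le>k. V j = W j" and near: "pnorm d H V W < \<delta>"
      and same: "mmul (d k) (seg d V (Suc k) (H + 1 - k)) M = mmul (d k) (seg d W (Suc k) (H + 1 - k)) M"
      and p: "p < d k" and b: "b < d 0"
    have "seg d V 1 k = M" unfolding M_def by (rule seg_cong) (use below in auto)
    then have "seg d V 1 (H + 1) = seg d W 1 (H + 1)"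
      using same seg_split[OF params_shaped[OF V], of k H] seg_split[OF L, of k H] k by (simp add: M_def)
    then have orth_V: "\<forall>q<d (k - 1). frob_inner ?dy (d 0) R (layer_dir d H V k p q) = 0"
      using orth V near k p unfolding orth_on_fibre_def by auto
    have lower: "seg d V 1 (k - 1) = seg d W 1 (k - 1)" by (rule seg_cong) (use below in auto)
    \<comment> \<open>As the lower product has full column rank, F^T R B^T = 0 reduces to F^T R = 0.\<close>
    show "(\<Sum>a<?dy. seg d V (Suc k) (H + 1 - k) a p * R a b) = 0"
      using layer_dir_orth_full_col_rank[OF full[folded lower] orth_V b] by simp
  qed
  ultimately show ?thesis using annihilates_upper_zero[OF W wid k(2) _ _ \<delta>] by blast
qed

lemma grad_zero_at_local_extremum:
  assumes W: "W \<in> params d H" and wid: "\<forall>j\<in>{1..H}. min (d 0) (d (H + 1)) \<le> d j"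
    and grad: "mat_has_grad (d (H + 1)) (d 0) f R (seg d W 1 (H + 1))"
    and s: "s = 1 \<or> s = -1" and \<epsilon>: "\<epsilon> > 0"
    and ext: "\<forall>V\<in>params d H. pnorm d H V W < \<epsilon> \<longrightarrow>
                s * f (seg d W 1 (H + 1)) \<le> s * f (seg d V 1 (H + 1))"
  shows "R = zmat"
proof (rule mats_eq_zmatI)
  show "R \<in> mats (d (H + 1)) (d 0)" using grad by (simp add: mat_has_grad_def)
  have orth: "orth_on_fibre d H W R (\<epsilon> / 2)" and "\<epsilon> / 2 > 0"
    using orth_on_fibre_at_extremum[OF W s \<epsilon> ext grad] \<epsilon> by simp_all
  show "\<forall>a<d (H + 1). \<forall>b<d 0. R a b = 0"
  proof (cases "d (H + 1) \<le> d 0")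
    case True
    then show ?thesis using orth_on_fibre_zero_narrow_output[OF W _ \<open>\<epsilon> / 2 > 0\<close> orth] wid by auto
  next
    case False
    then show ?thesis using orth_on_fibre_zero_narrow_input[OF W _ \<open>\<epsilon> / 2 > 0\<close> orth] wid by auto
  qed
qed

section \<open>The product map: continuity, surjectivity, openness\<close>

lemma seg_lipschitz:
  assumes W: "W \<in> params d H"
  shows "a \<le> H + 1 \<Longrightarrow> \<exists>C\<ge>0. \<forall>V\<in>params d H. pnorm d H V W \<le> 1 \<longrightarrow>
     frob_norm (d a) (d 0) (msub (seg d V 1 a) (seg d W 1 a)) \<le> C * pnorm d H V W"
proof (induction a)
  case 0
  show ?case by (intro exI[of _ 0]) (simp add: msub_def frob_norm_def frob_inner_def)
next
  case (Suc a)
  obtain C where C: "C \<ge> 0" "\<forall>V\<in>params d H. pnorm d H V W \<le> 1 \<longrightarrow>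
     frob_norm (d a) (d 0) (msub (seg d V 1 a) (seg d W 1 a)) \<le> C * pnorm d H V W"
    using Suc by auto
  define fW where "fW = frob_norm (d (Suc a)) (d a) (W (Suc a))"
  define fS where "fS = frob_norm (d a) (d 0) (seg d W 1 a)"
  have layer: "Suc a \<in> {1..H+1}" using Suc.prems by simp
  show ?case
  proof (intro exI[of _ "(fW + 1) * C + fS"] conjI ballI impI)
    show "0 \<le> (fW + 1) * C + fS" using C by (simp add: fW_def fS_def)
    fix V assume V: "V \<in> params d H" and V1: "pnorm d H V W \<le> 1"
    let ?\<rho> = "pnorm d H V W" and ?D = "msub (V (Suc a)) (W (Suc a))"
    have D: "frob_norm (d (Suc a)) (d a) ?D \<le> ?\<rho>"
      using frob_norm_layer_le_pnorm[OF layer, of d V W] by simp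
    have "frob_norm (d (Suc a)) (d a) (V (Suc a)) \<le> fW + frob_norm (d (Suc a)) (d a) ?D"
      using frob_norm_triangle[of "d (Suc a)" "d a" "W (Suc a)" ?D] by (simp add: fW_def msub_def)
    then have VSa: "frob_norm (d (Suc a)) (d a) (V (Suc a)) \<le> fW + 1" using D V1 by linarith
    \<comment> \<open>V_{a+1} V_{a:1} - W_{a+1} W_{a:1} = V_{a+1} (V_{a:1} - W_{a:1}) + (V_{a+1} - W_{a+1}) W_{a:1}\<close>
    have "msub (seg d V 1 (Suc a)) (seg d W 1 (Suc a)) =
       (\<lambda>i j. mmul (d a) (V (Suc a)) (msub (seg d V 1 a) (seg d W 1 a)) i j + mmul (d a) ?D (seg d W 1 a) i j)"
      by (simp add: seg.simps(2) msub_def mmul_def algebra_simps sum_subtractf)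
    then have "frob_norm (d (Suc a)) (d 0) (msub (seg d V 1 (Suc a)) (seg d W 1 (Suc a)))
       \<le> frob_norm (d (Suc a)) (d 0) (mmul (d a) (V (Suc a)) (msub (seg d V 1 a) (seg d W 1 a)))
        + frob_norm (d (Suc a)) (d 0) (mmul (d a) ?D (seg d W 1 a))"
      by (simp add: frob_norm_triangle)
    also have "\<dots> \<le> frob_norm (d (Suc a)) (d a) (V (Suc a)) * frob_norm (d a) (d 0) (msub (seg d V 1 a) (seg d W 1 a))
        + frob_norm (d (Suc a)) (d a) ?D * fS"
      unfolding fS_def by (intro add_mono frob_norm_mmul_le)
    also have "\<dots> \<le> (fW + 1) * (C * ?\<rho>) + ?\<rho> * fS"
      using C(2) V V1 VSa D by (intro add_mono mult_mono) (auto simp: fS_def fW_def)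
    also have "\<dots> = ((fW + 1) * C + fS) * ?\<rho>" by (simp add: algebra_simps)
    finally show "frob_norm (d (Suc a)) (d 0) (msub (seg d V 1 (Suc a)) (seg d W 1 (Suc a)))
        \<le> ((fW + 1) * C + fS) * ?\<rho>" .
  qed
qed

lemma seg_continuous:
  assumes W: "W \<in> params d H" and \<epsilon>: "\<epsilon> > 0"
  shows "\<exists>\<delta>>0. \<forall>V\<in>params d H. pnorm d H V W < \<delta> \<longrightarrow>
     frob_norm (d (H + 1)) (d 0) (msub (seg d V 1 (H + 1)) (seg d W 1 (H + 1))) < \<epsilon>"
proof -
  obtain C where C: "C \<ge> 0" "\<forall>V\<in>params d H. pnorm d H V W \<le> 1 \<longrightarrow>
     frob_norm (d (H + 1)) (d 0) (msub (seg d V 1 (H + 1)) (seg d W 1 (H + 1))) \<le> C * pnorm d H V W"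
    using seg_lipschitz[OF W, of "H + 1"] by auto
  show ?thesis
  proof (intro exI[of _ "min 1 (\<epsilon> / (C + 1))"] conjI ballI impI)
    show "min 1 (\<epsilon> / (C + 1)) > 0" using \<epsilon> C by simp
    fix V assume V: "V \<in> params d H" and near: "pnorm d H V W < min 1 (\<epsilon> / (C + 1))"
    then have "pnorm d H V W * (C + 1) < \<epsilon>" using C by (simp add: field_simps)
    moreover have "C * pnorm d H V W \<le> pnorm d H V W * (C + 1)" by (simp add: algebra_simps)
    ultimately show "frob_norm (d (H + 1)) (d 0) (msub (seg d V 1 (H + 1)) (seg d W 1 (H + 1))) < \<epsilon>"
      using C(2) V near by fastforce
  qed
qed

text \<open>Surjectivity: route the matrix through identity layers of the smallest width.\<close>

lemma seg_onto_narrow_input: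
  assumes wid: "\<forall>j\<le>H. d 0 \<le> d j" and X: "X \<in> mats (d (H + 1)) (d 0)"
  shows "\<exists>V\<in>params d H. seg d V 1 (H + 1) = X"
proof
  define V where "V = (\<lambda>j. if j = H + 1 then X else if 1 \<le> j \<and> j \<le> H then ident (d 0) else zmat)"
  have "X \<in> mats (d (H + 1)) (d H)" using X wid by (auto intro: mats_mono)
  moreover have "ident (d 0) \<in> mats (d j) (d (j - 1))" if "1 \<le> j" "j \<le> H" for j
    using wid that by (simp add: ident_mats)
  ultimately show "V \<in> params d H" by (auto simp: params_def V_def)
  have "a \<le> H \<Longrightarrow> seg d V 1 a = ident (d 0)" for a
  proof (induction a)
    case (Suc a)
    then have "seg d V 1 (Suc a) = mmul (d a) (ident (d 0)) (ident (d 0))"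
      by (simp add: seg.simps(2) V_def)
    also have "\<dots> = ident (d 0)"
      using wid Suc.prems by (intro mmul_ident_left ident_mats) auto
    finally show ?case .
  qed simp
  then have "seg d V 1 (H + 1) = mmul (d H) X (ident (d 0))"
    by (simp add: seg.simps(2) V_def)
  also have "\<dots> = X" using wid X by (intro mmul_ident_right) auto
  finally show "seg d V 1 (H + 1) = X" .
qed

lemma seg_onto_narrow_output:
  assumes H: "H \<ge> 1" and wid: "\<forall>j\<in>{1..H+1}. d (H + 1) \<le> d j" and X: "X \<in> mats (d (H + 1)) (d 0)"
  shows "\<exists>V\<in>params d H. seg d V 1 (H + 1) = X"
proof
  define V where "V = (\<lambda>j. if j = 1 then X else if 2 \<le> j \<and> j \<le> H + 1 then ident (d (H + 1)) else zmat)"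
  have "X \<in> mats (d 1) (d 0)" using X wid H by (auto intro: mats_mono)
  moreover have "ident (d (H + 1)) \<in> mats (d j) (d (j - 1))" if "2 \<le> j" "j \<le> H + 1" for j
    using that by (intro ident_mats wid[rule_format]) auto
  ultimately show "V \<in> params d H" by (auto simp: params_def V_def)
  have "1 \<le> a \<Longrightarrow> a \<le> H + 1 \<Longrightarrow> seg d V 1 a = X" for a
  proof (induction a)
    case (Suc a)
    show ?case
    proof (cases "a = 0")
      case True
      then show ?thesis using X by (simp add: seg.simps(2) V_def mmul_ident_right)
    next
      case False
      then have "seg d V 1 (Suc a) = mmul (d a) (ident (d (H + 1))) X"
        using Suc by (simp add: seg.simps(2) V_def)
      also have "\<dots> = X"
        using wid[rule_format, of a] Suc.prems False X by (intro mmul_ident_left) auto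
      finally show ?thesis .
    qed
  qed simp
  then show "seg d V 1 (H + 1) = X" by simp
qed

lemma seg_onto:
  assumes "H \<ge> 1" and wid: "\<forall>j\<in>{1..H}. min (d 0) (d (H + 1)) \<le> d j" and "X \<in> mats (d (H + 1)) (d 0)"
  shows "\<exists>V\<in>params d H. seg d V 1 (H + 1) = X"
proof (cases "d 0 \<le> d (H + 1)")
  case True
  have "d 0 \<le> d j" if "j \<le> H" for j
    using wid[rule_format, of j] that True by (cases "j = 0") auto
  then show ?thesis using seg_onto_narrow_input assms(3) by blast
next
  case False
  have "d (H + 1) \<le> d j" if "j \<in> {1..H+1}" for j
    using wid[rule_format, of j] that False by (cases "j = H + 1") auto
  then show ?thesis using seg_onto_narrow_output assms by blast
qed

lemma full_rank_factors_solvable: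
  assumes F: "full_row_rank m p F" "F \<in> mats m p" and B: "full_col_rank q n B" "B \<in> mats q n"
  shows "\<exists>C\<ge>0. \<forall>E\<in>mats m n. \<exists>\<Delta>\<in>mats p q.
           mmul p F (mmul q \<Delta> B) = E \<and> frob_norm p q \<Delta> \<le> C * frob_norm m n E"
proof -
  obtain Y where Y: "Y \<in> mats p m" "mmul p F Y = ident m"
    using full_row_rank_right_inverse[OF F] by blast
  obtain Z where Z: "Z \<in> mats n q" "mmul q Z B = ident n"
    using full_col_rank_left_inverse[OF B] by blast
  show ?thesis
  proof (intro exI[of _ "frob_norm p m Y * frob_norm n q Z"] conjI ballI)
    show "0 \<le> frob_norm p m Y * frob_norm n q Z" by simp
    fix E assume E: "E \<in> mats m n"
    show "\<exists>\<Delta>\<in>mats p q. mmul p F (mmul q \<Delta> B) = E \<and>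
        frob_norm p q \<Delta> \<le> frob_norm p m Y * frob_norm n q Z * frob_norm m n E"
    proof (intro bexI conjI)
      have YE: "mmul m Y E \<in> mats p n" using Y(1) E by (rule mmul_mats)
      have "mmul q (mmul n (mmul m Y E) Z) B = mmul m Y E"
        by (simp add: mmul_assoc Z(2) mmul_ident_right[OF order_refl E])
      then show "mmul p F (mmul q (mmul n (mmul m Y E) Z) B) = E"
        by (simp add: mmul_assoc[symmetric] Y(2) mmul_ident_left[OF order_refl E])
      have "frob_norm p q (mmul n (mmul m Y E) Z) \<le> frob_norm p n (mmul m Y E) * frob_norm n q Z"
        by (rule frob_norm_mmul_le)
      also have "\<dots> \<le> frob_norm p m Y * frob_norm m n E * frob_norm n q Z"
        by (intro mult_right_mono frob_norm_mmul_le) simp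
      finally show "frob_norm p q (mmul n (mmul m Y E) Z) \<le> frob_norm p m Y * frob_norm n q Z * frob_norm m n E"
        by (simp add: mult_ac)
      show "mmul n (mmul m Y E) Z \<in> mats p q" using YE Z(1) by (rule mmul_mats)
    qed
  qed
qed

lemma seg_open_at_full_rank:
  assumes W: "W \<in> params d H" and j: "j \<in> {1..H+1}"
    and frr: "full_row_rank (d (H + 1)) (d j) (seg d W (j + 1) (H + 1 - j))"
    and fcr: "full_col_rank (d (j - 1)) (d 0) (seg d W 1 (j - 1))" and \<epsilon>: "\<epsilon> > 0"
  shows "\<exists>\<epsilon>'>0. \<forall>X\<in>mats (d (H + 1)) (d 0). frob_norm (d (H + 1)) (d 0) (msub X (seg d W 1 (H + 1))) < \<epsilon>' \<longrightarrow>
     (\<exists>V\<in>params d H. pnorm d H V W < \<epsilon> \<and> seg d V 1 (H + 1) = X)"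
proof -
  let ?dy = "d (H + 1)" and ?dx = "d 0"
  define F where "F = seg d W (j + 1) (H + 1 - j)"
  define B where "B = seg d W 1 (j - 1)"
  note L = params_shaped[OF W]
  have j1: "1 \<le> j" "j \<le> H + 1" using j by auto
  have "F \<in> mats ?dy (d j)" using seg_mats[OF L, of "j + 1" "H + 1 - j"] j1 by (simp add: F_def)
  moreover have "B \<in> mats (d (j - 1)) ?dx" using seg_mats[OF L, of 1 "j - 1"] by (simp add: B_def)
  ultimately obtain C where C: "C \<ge> 0" "\<forall>E\<in>mats ?dy ?dx. \<exists>\<Delta>\<in>mats (d j) (d (j - 1)).
      mmul (d j) F (mmul (d (j - 1)) \<Delta> B) = E \<and> frob_norm (d j) (d (j - 1)) \<Delta> \<le> C * frob_norm ?dy ?dx E"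
    using full_rank_factors_solvable frr fcr unfolding F_def B_def by blast
  show ?thesis
  proof (intro exI[of _ "\<epsilon> / (C + 1)"] conjI ballI impI)
    show "\<epsilon> / (C + 1) > 0" using \<epsilon> C by simp
    fix X assume X: "X \<in> mats ?dy ?dx"
      and near: "frob_norm ?dy ?dx (msub X (seg d W 1 (H + 1))) < \<epsilon> / (C + 1)"
    define E where "E = msub X (seg d W 1 (H + 1))"
    have "E \<in> mats ?dy ?dx"
      using X seg_params_mats[OF W] by (auto simp: mats_def E_def msub_def)
    then obtain \<Delta> where \<Delta>: "\<Delta> \<in> mats (d j) (d (j - 1))" "mmul (d j) F (mmul (d (j - 1)) \<Delta> B) = E"
      "frob_norm (d j) (d (j - 1)) \<Delta> \<le> C * frob_norm ?dy ?dx E"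
      using C(2) by blast
    define V where "V = W(j := madd (W j) \<Delta>)"
    have Wj: "madd (W j) \<Delta> \<in> mats (d j) (d (j - 1))"
      using L \<Delta>(1) unfolding shaped_def by (auto simp: mats_def madd_def)
    then have V: "V \<in> params d H" unfolding V_def by (rule params_fun_upd[OF W j])
    have "seg d V 1 (H + 1) = madd (seg d W 1 (H + 1)) E"
      unfolding V_def using seg_madd_layer[OF L \<Delta>(1) j1] \<Delta>(2) by (simp add: F_def B_def)
    then have "seg d V 1 (H + 1) = X" by (simp add: madd_def E_def msub_def)
    moreover have "pnorm d H V W < \<epsilon>"
    proof -
      have "pnorm d H V W \<le> C * frob_norm ?dy ?dx E"
        using \<Delta>(3) by (simp add: V_def pnorm_fun_upd[OF j] msub_def madd_def)
      also have "\<dots> \<le> (C + 1) * frob_norm ?dy ?dx E" by (simp add: algebra_simps)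
      also have "\<dots> < (C + 1) * (\<epsilon> / (C + 1))"
        using near C(1) by (intro mult_strict_left_mono) (simp_all add: E_def)
      also have "\<dots> = \<epsilon>" using C(1) by simp
      finally show ?thesis .
    qed
    ultimately show "\<exists>V\<in>params d H. pnorm d H V W < \<epsilon> \<and> seg d V 1 (H + 1) = X" using V by blast
  qed
qed

section \<open>Local and global optimality of the network loss\<close>

lemma mat_has_grad_mat_grad:
  "mat_differentiable m n f \<Longrightarrow> M \<in> mats m n \<Longrightarrow> mat_has_grad m n f (mat_grad m n f M) M"
  unfolding mat_differentiable_def mat_grad_def by (metis someI_ex)

lemma mat_local_max_iff_min_uminus: "mat_local_max m n f M \<longleftrightarrow> mat_local_min m n (\<lambda>X. - f X) M"
  by (simp add: mat_local_max_def mat_local_min_def)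

lemma mat_global_max_iff_min_uminus: "mat_global_max m n f M \<longleftrightarrow> mat_global_min m n (\<lambda>X. - f X) M"
  by (simp add: mat_global_max_def mat_global_min_def)

lemma p_local_max_iff_min_uminus: "p_local_max d H L W \<longleftrightarrow> p_local_min d H (\<lambda>V. - L V) W"
  by (simp add: p_local_max_def p_local_min_def)

lemma p_global_max_iff_min_uminus: "p_global_max d H L W \<longleftrightarrow> p_global_min d H (\<lambda>V. - L V) W"
  by (simp add: p_global_max_def p_global_min_def)

lemma p_saddle_if_grad_nonzero:
  assumes W: "W \<in> params d H" and wid: "\<forall>j\<in>{1..H}. min (d 0) (d (H + 1)) \<le> d j"
    and crit: "p_critical d H (\<lambda>V. f (seg d V 1 (H + 1))) W"
    and grad: "mat_has_grad (d (H + 1)) (d 0) f R (seg d W 1 (H + 1))" and R: "R \<noteq> zmat"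
  shows "p_saddle d H (\<lambda>V. f (seg d V 1 (H + 1))) W"
proof -
  have "\<not> p_local_min d H (\<lambda>V. f (seg d V 1 (H + 1))) W"
    using grad_zero_at_local_extremum[OF W wid grad, of 1] R unfolding p_local_min_def by auto
  moreover have "\<not> p_local_max d H (\<lambda>V. f (seg d V 1 (H + 1))) W"
    using grad_zero_at_local_extremum[OF W wid grad, of "-1"] R unfolding p_local_max_def by auto
  ultimately show ?thesis using crit unfolding p_saddle_def by blast
qed

lemma p_local_min_if_mat_local_min:
  assumes W: "W \<in> params d H" and min: "mat_local_min (d (H + 1)) (d 0) f (seg d W 1 (H + 1))"
  shows "p_local_min d H (\<lambda>V. f (seg d V 1 (H + 1))) W"
proof -
  obtain \<epsilon> where "\<epsilon> > 0" and \<epsilon>: "\<forall>X\<in>mats (d (H + 1)) (d 0).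
      frob_norm (d (H + 1)) (d 0) (msub X (seg d W 1 (H + 1))) < \<epsilon> \<longrightarrow> f (seg d W 1 (H + 1)) \<le> f X"
    using min unfolding mat_local_min_def by blast
  then obtain \<delta> where "\<delta> > 0" "\<forall>V\<in>params d H. pnorm d H V W < \<delta> \<longrightarrow>
      frob_norm (d (H + 1)) (d 0) (msub (seg d V 1 (H + 1)) (seg d W 1 (H + 1))) < \<epsilon>"
    using seg_continuous[OF W] by blast
  then show ?thesis
    unfolding p_local_min_def using \<epsilon> seg_params_mats by blast
qed

lemma p_global_min_iff_mat_global_min:
  assumes "H \<ge> 1" and wid: "\<forall>j\<in>{1..H}. min (d 0) (d (H + 1)) \<le> d j" and W: "W \<in> params d H"
  shows "p_global_min d H (\<lambda>V. f (seg d V 1 (H + 1))) W \<longleftrightarrow>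
         mat_global_min (d (H + 1)) (d 0) f (seg d W 1 (H + 1))"
  unfolding p_global_min_def mat_global_min_def
  using seg_onto[OF assms(1) wid] seg_params_mats by metis

lemma grad_zero_if_full_rank_factors:
  assumes W: "W \<in> params d H" and crit: "p_critical d H (\<lambda>V. f (seg d V 1 (H + 1))) W"
    and grad: "mat_has_grad (d (H + 1)) (d 0) f R (seg d W 1 (H + 1))" and j: "j \<in> {1..H+1}"
    and frr: "full_row_rank (d (H + 1)) (d j) (seg d W (j + 1) (H + 1 - j))"
    and fcr: "full_col_rank (d (j - 1)) (d 0) (seg d W 1 (j - 1))"
  shows "R = zmat"
proof (rule mats_eq_zmatI)
  show "R \<in> mats (d (H + 1)) (d 0)" using grad by (simp add: mat_has_grad_def)
  have rows: "(\<Sum>b<d 0. R a b * seg d W 1 (j - 1) q b) = 0" if "q < d (j - 1)" "a < d (H + 1)" for q a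
    using layer_dir_orth_full_row_rank[OF frr] critical_orth_layer_dir[OF W crit grad j] that by blast
  show "\<forall>a<d (H + 1). \<forall>b<d 0. R a b = 0"
  proof (intro allI impI)
    fix a b assume a: "a < d (H + 1)" and b: "b < d 0"
    have "\<forall>q<d (j - 1). (\<Sum>b<d 0. seg d W 1 (j - 1) q b * R a b) = 0"
      using rows a by (simp add: mult.commute)
    then show "R a b = 0"
      using fcr[unfolded full_col_rank_def, rule_format, of "\<lambda>b. R a b"] b by blast
  qed
qed

lemma mat_local_min_if_p_local_min:
  assumes W: "W \<in> params d H" and j: "j \<in> {1..H+1}"
    and frr: "full_row_rank (d (H + 1)) (d j) (seg d W (j + 1) (H + 1 - j))"
    and fcr: "full_col_rank (d (j - 1)) (d 0) (seg d W 1 (j - 1))"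
    and min: "p_local_min d H (\<lambda>V. f (seg d V 1 (H + 1))) W"
  shows "mat_local_min (d (H + 1)) (d 0) f (seg d W 1 (H + 1))"
proof -
  obtain \<epsilon> where "\<epsilon> > 0" and \<epsilon>: "\<forall>V\<in>params d H. pnorm d H V W < \<epsilon> \<longrightarrow>
      f (seg d W 1 (H + 1)) \<le> f (seg d V 1 (H + 1))"
    using min unfolding p_local_min_def by blast
  then obtain \<epsilon>' where "\<epsilon>' > 0" "\<forall>X\<in>mats (d (H + 1)) (d 0).
      frob_norm (d (H + 1)) (d 0) (msub X (seg d W 1 (H + 1))) < \<epsilon>' \<longrightarrow>
      (\<exists>V\<in>params d H. pnorm d H V W < \<epsilon> \<and> seg d V 1 (H + 1) = X)"
    using seg_open_at_full_rank[OF W j frr fcr] by blast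
  then show ?thesis
    unfolding mat_local_min_def using \<epsilon> by metis
qed

theorem theorem3:
  fixes H dx dy :: nat and d :: "nat \<Rightarrow> nat" and l0 :: "mat \<Rightarrow> real"
    and What :: "nat \<Rightarrow> mat"
  assumes "H \<ge> 1" and "d 0 = dx" and "d (H + 1) = dy"
    and "\<forall>j\<in>{1..H}. d j \<ge> min dx dy"
    and "mat_differentiable dy dx l0"
    and "What \<in> params d H"
    and "p_critical d H (\<lambda>W. l0 (seg d W 1 (H + 1))) What"
  shows
   "(mat_grad dy dx l0 (seg d What 1 (H + 1)) \<noteq> zmat \<longrightarrow>
       p_saddle d H (\<lambda>W. l0 (seg d W 1 (H + 1))) What)
  \<and> (mat_grad dy dx l0 (seg d What 1 (H + 1)) = zmat \<longrightarrow>
       (mat_local_min dy dx l0 (seg d What 1 (H + 1)) \<longrightarrow>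
          p_local_min d H (\<lambda>W. l0 (seg d W 1 (H + 1))) What)
     \<and> (mat_local_max dy dx l0 (seg d What 1 (H + 1)) \<longrightarrow>
          p_local_max d H (\<lambda>W. l0 (seg d W 1 (H + 1))) What)
     \<and> (p_global_min d H (\<lambda>W. l0 (seg d W 1 (H + 1))) What \<longleftrightarrow>
          mat_global_min dy dx l0 (seg d What 1 (H + 1)))
     \<and> (p_global_max d H (\<lambda>W. l0 (seg d W 1 (H + 1))) What \<longleftrightarrow>
          mat_global_max dy dx l0 (seg d What 1 (H + 1))))
  \<and> ((\<exists>j\<in>{1..H+1}. full_row_rank dy (d j) (seg d What (j + 1) (H + 1 - j))
                   \<and> full_col_rank (d (j - 1)) dx (seg d What 1 (j - 1))) \<longrightarrow>
       mat_grad dy dx l0 (seg d What 1 (H + 1)) = zmat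
     \<and> (p_local_min d H (\<lambda>W. l0 (seg d W 1 (H + 1))) What \<longrightarrow>
          mat_local_min dy dx l0 (seg d What 1 (H + 1)))
     \<and> (p_local_max d H (\<lambda>W. l0 (seg d W 1 (H + 1))) What \<longrightarrow>
          mat_local_max dy dx l0 (seg d What 1 (H + 1))))"
proof -
  note W = assms(6) and crit = assms(7)
  have wid: "\<forall>j\<in>{1..H}. min (d 0) (d (H + 1)) \<le> d j" using assms(2-4) by simp
  define R where "R = mat_grad (d (H + 1)) (d 0) l0 (seg d What 1 (H + 1))"
  have grad: "mat_has_grad (d (H + 1)) (d 0) l0 R (seg d What 1 (H + 1))"
    unfolding R_def using assms(2,3,5) seg_params_mats[OF W] by (intro mat_has_grad_mat_grad) simp_all
  have saddle: "R \<noteq> zmat \<longrightarrow> p_saddle d H (\<lambda>W. l0 (seg d W 1 (H + 1))) What"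
    using p_saddle_if_grad_nonzero[OF W wid crit grad] by blast
  show ?thesis
    unfolding assms(2,3)[symmetric] R_def[symmetric]
      mat_local_max_iff_min_uminus p_local_max_iff_min_uminus
      mat_global_max_iff_min_uminus p_global_max_iff_min_uminus
    using saddle grad_zero_if_full_rank_factors[OF W crit grad]
      p_local_min_if_mat_local_min[OF W, of l0] p_local_min_if_mat_local_min[OF W, of "\<lambda>X. - l0 X"]
      p_global_min_iff_mat_global_min[OF assms(1) wid W, of l0]
      p_global_min_iff_mat_global_min[OF assms(1) wid W, of "\<lambda>X. - l0 X"]
      mat_local_min_if_p_local_min[OF W, where f = l0]
      mat_local_min_if_p_local_min[OF W, where f = "\<lambda>X. - l0 X"]
    by blast
qed
end
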